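(* Let $\alpha>0$ and let $a_1,\dots,a_N,b_1,\dots,b_{N-1}$ be independent with $a_i\sim\mathcal N(0,\alpha)$, $b_i\ge0$, $b_i^2\sim\frac\alpha2\chi^2(2i/\alpha)$; set $c_i=(b_i^2-i)/\sqrt i$. Let $\theta_N=1+N^{-2/3}w_N$ where $w_N>0$, $(\log\log N)^2/w_N\to0$ and $w_N/(\log N)^2\to0$. For $1\le i\le N$ let $r_i=1+\sqrt{1-\frac{i-1}{N\theta_N^2}}$, $m_i=1-\sqrt{1-\frac{i-1}{N\theta_N^2}}$, $\gamma_i=m_i/r_i$, and for $3\le i\le N$ let \[ \xi_i=\frac{a_i}{\sqrt N\theta_N r_i}+\sqrt{\frac{m_i}{r_i}}\,\frac{c_{i-1}}{\sqrt N\theta_N r_{i-1}}. \] Define $L_2=0$ and $L_i=\xi_i+\gamma_iL_{i-1}$ for $3\le i\le N$. Then \[ \frac{\sum_{i=3}^NL_i}{\sqrt{\alpha\log\frac{\theta_N+\sqrt{\theta_N^2-1}}{2\sqrt{\theta_N^2-1}}}}\xrightarrow{d}\mathcal N(0,1). \]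
   Context: For $d>0$, $\chi^2(d)$ denotes the distribution with density $\frac{1}{2^{d/2}\Gamma(d/2)}x^{d/2-1}e^{-x/2}\mathbf 1_{x>0}$. *)

theory Defs
  imports "HOL-Probability.Probability"
begin

definition chi2_density :: "real \<Rightarrow> real \<Rightarrow> real" where
  "chi2_density d x = (if x > 0 then
     1 / (2 powr (d/2) * Gamma (d/2)) * x powr (d/2 - 1) * exp (-x/2) else 0)"

definition chi2_distribution :: "real \<Rightarrow> real measure" where
  "chi2_distribution d = density lborel (\<lambda>x. ennreal (chi2_density d x))"

definition thetaN :: "(nat \<Rightarrow> real) \<Rightarrow> nat \<Rightarrow> real" where
  "thetaN w N = 1 + real N powr (-2/3) * w N"

definition rr :: "real \<Rightarrow> nat \<Rightarrow> nat \<Rightarrow> real" where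
  "rr \<theta> N i = 1 + sqrt (1 - (real i - 1) / (real N * \<theta>\<^sup>2))"

definition mm :: "real \<Rightarrow> nat \<Rightarrow> nat \<Rightarrow> real" where
  "mm \<theta> N i = 1 - sqrt (1 - (real i - 1) / (real N * \<theta>\<^sup>2))"

definition gam :: "real \<Rightarrow> nat \<Rightarrow> nat \<Rightarrow> real" where
  "gam \<theta> N i = mm \<theta> N i / rr \<theta> N i"

definition cc :: "(nat \<Rightarrow> 'a \<Rightarrow> real) \<Rightarrow> nat \<Rightarrow> 'a \<Rightarrow> real" where
  "cc b j \<omega> = ((b j \<omega>)\<^sup>2 - real j) / sqrt (real j)"

definition xi :: "real \<Rightarrow> nat \<Rightarrow> (nat \<Rightarrow> 'a \<Rightarrow> real) \<Rightarrow> (nat \<Rightarrow> 'a \<Rightarrow> real)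
    \<Rightarrow> nat \<Rightarrow> 'a \<Rightarrow> real" where
  "xi \<theta> N a b i \<omega> =
     a i \<omega> / (sqrt (real N) * \<theta> * rr \<theta> N i)
     + sqrt (mm \<theta> N i / rr \<theta> N i) * cc b (i - 1) \<omega> / (sqrt (real N) * \<theta> * rr \<theta> N (i - 1))"

text \<open>L_i for i \<le> 2 is 0 (only L_2 = 0 is used); L_i = xi_i + gamma_i L_(i-1) for i \<ge> 3.\<close>
primrec LL :: "real \<Rightarrow> nat \<Rightarrow> (nat \<Rightarrow> 'a \<Rightarrow> real) \<Rightarrow> (nat \<Rightarrow> 'a \<Rightarrow> real)
    \<Rightarrow> nat \<Rightarrow> 'a \<Rightarrow> real" where
  "LL \<theta> N a b 0 = (\<lambda>\<omega>. 0)"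
| "LL \<theta> N a b (Suc i) = (if Suc i \<le> 2 then (\<lambda>\<omega>. 0)
     else (\<lambda>\<omega>. xi \<theta> N a b (Suc i) \<omega> + gam \<theta> N (Suc i) * LL \<theta> N a b i \<omega>))"

end

theory Submission
  imports Defs "HOL-Real_Asymp.Real_Asymp"
begin

(* Unrolling the recursion gives sum_(i=3..N) L_i = sum_i H_i xi_i, with the weights
   H_i = sum_(j=i..N) prod_(k=i+1..j) gamma_k (L_weight) and xi_i = p_i a_i + q_i c_(i-1)
   (a_coef, c_coef).  Hence the sum is a weighted sum of the independent centred entries a_i, c_j,
   which all have variance alpha and fourth moments at most 3 alpha^2 + 6 alpha^3; by a
   Lyapunov-type estimate of characteristic functions it is asymptotically normal as soon as the
   largest weight is negligible against the total variance.
   As gamma_i varies slowly, H_i is close to the fixed point f_i = 1/(1 - gamma_i) of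
   f = 1 + gamma_i f, with an error controlled by delta = h / s_N^3, where h = 1/(N theta^2) and
   s_i = sqrt (1 - (i - 1) h).  Then (p_i^2 + q_i^2) H_i^2 is h phi((i - 1) h) up to a factor
   1 + O(delta), with phi the derivative of F x = ln ((1 + sqrt (1 - x)) / sqrt (1 - x)); so the
   variance divided by alpha is a Riemann sum for F (1/theta^2) - F 0, which is the logarithm
   in the normalisation and tends to infinity as theta_N tends to 1.  The largest squared
   weight is at most 4 delta, and delta tends to 0 because w_N tends to infinity. *)

section \<open>Moments of the entries\<close>

lemma has_bochner_integral_Gamma:
  fixes z :: real
  assumes z: "z > 0"
  shows "has_bochner_integral lborel (\<lambda>t. indicator {0..} t * (t powr (z - 1) / exp t)) (Gamma z)"
proof -
  have "(\<lambda>t. indicator {0..} t * (t powr (z - 1) / exp t))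
      = (\<lambda>t. if t \<in> {0..} then t powr (z - 1) / exp t else 0)"
    by (auto simp: indicator_def)
  then have "((\<lambda>t. indicator {0..} t * (t powr (z - 1) / exp t)) has_integral Gamma z) UNIV"
    using Gamma_integral_real[OF z] by (simp only: has_integral_restrict_UNIV)
  then have "integral\<^sup>N lborel (\<lambda>t. indicator {0..} t * (t powr (z - 1) / exp t)) = Gamma z"
    by (intro nn_integral_has_integral_lborel) (auto simp: indicator_def)
  then show ?thesis
    by (intro has_bochner_integral_nn_integral)
       (auto simp: indicator_def less_imp_le[OF Gamma_real_pos[OF z]])
qed

lemma chi2_density_nonneg: "d > 0 \<Longrightarrow> chi2_density d x \<ge> 0"
  unfolding chi2_density_def
  by (auto intro!: mult_nonneg_nonneg divide_nonneg_nonneg less_imp_le[OF Gamma_real_pos])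

lemma chi2_moment:
  fixes d :: real
  assumes d: "d > 0"
  shows "has_bochner_integral lborel (\<lambda>x. chi2_density d x * x ^ n) (\<Prod>k<n. d + 2 * real k)"
proof -
  define z where "z = d/2 + real n"
  have z: "z > 0" using d by (simp add: z_def add_pos_nonneg)
  define K where "K = 2 powr (real n - 1) / Gamma (d/2)"
  have G: "Gamma (d/2) > 0" using d by simp
  have substitution: "chi2_density d (0 + 2 * y) * (0 + 2 * y) ^ n
      = K * (indicator {0..} y * (y powr (z - 1) / exp y))" for y
  proof (cases "y > 0")
    case True
    have "(2*y)^n = (2*y) powr (real n)" using True by (simp add: powr_realpow)
    then have "(2*y) powr (d/2 - 1) * (2*y)^n = (2*y) powr (z - 1)"
      using True by (simp add: z_def powr_add[symmetric] algebra_simps)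
    also have "\<dots> = 2 powr (d/2) * 2 powr (real n - 1) * y powr (z - 1)"
      using True by (simp add: powr_mult z_def powr_add[symmetric] algebra_simps)
    finally have "(2*y) powr (d/2 - 1) * (2*y)^n
        = 2 powr (d/2) * 2 powr (real n - 1) * y powr (z - 1)" .
    then show ?thesis
      using True G unfolding chi2_density_def K_def by (simp add: field_simps exp_minus)
  qed (auto simp: chi2_density_def indicator_def)
  have "has_bochner_integral lborel (\<lambda>y. K * (indicator {0..} y * (y powr (z - 1) / exp y)))
      (K * Gamma z)"
    by (intro has_bochner_integral_mult_right has_bochner_integral_Gamma z)
  then have "has_bochner_integral lborel (\<lambda>y. chi2_density d (0 + 2 * y) * (0 + 2 * y) ^ n)
      ((2 * K * Gamma z) /\<^sub>R \<bar>2\<bar>)"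
    by (simp only: substitution) simp
  then have "has_bochner_integral lborel (\<lambda>x. chi2_density d x * x ^ n) (2 * K * Gamma z)"
    by (subst lborel_has_bochner_integral_real_affine_iff[where c=2 and t=0]) auto
  moreover have "2 * K * Gamma z = (\<Prod>k<n. d + 2 * real k)"
  proof -
    have "Gamma z = Gamma (d/2) * (\<Prod>k<n. d/2 + real k)"
      using pochhammer_Gamma[of "d/2" n] G d
      by (simp add: z_def pochhammer_prod atLeast0LessThan nonpos_Ints_def field_simps)
    moreover have "(\<Prod>k<n. d + 2 * real k) = 2 ^ n * (\<Prod>k<n. d/2 + real k)"
      by (induction n) (auto simp: algebra_simps)
    moreover have "2 * 2 powr (real n - 1) = (2::real) ^ n"
      by (simp add: powr_diff powr_realpow)
    ultimately show ?thesis using G unfolding K_def by (simp add: field_simps)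
  qed
  ultimately show ?thesis by simp
qed

lemma (in prob_space) scaled_chi2_moment:
  assumes \<alpha>: "\<alpha> > 0" and d: "d > 0" and Y: "Y \<in> borel_measurable M"
    and distr_Y: "distr M borel Y = distr (chi2_distribution d) borel (\<lambda>x. \<alpha> / 2 * x)"
  shows "has_bochner_integral M (\<lambda>\<omega>. Y \<omega> ^ n) (\<Prod>k<n. \<alpha> * d / 2 + \<alpha> * real k)"
proof -
  have "chi2_density d \<in> borel_measurable borel"
    unfolding chi2_density_def[abs_def] by measurable
  moreover have "has_bochner_integral lborel (\<lambda>x. chi2_density d x * (\<alpha> / 2 * x) ^ n)
      ((\<alpha> / 2) ^ n * (\<Prod>k<n. d + 2 * real k))"
    unfolding power_mult_distrib mult.left_commute[of "chi2_density d _"]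
    by (intro has_bochner_integral_mult_right chi2_moment d)
  ultimately have "has_bochner_integral (chi2_distribution d) (\<lambda>x. (\<alpha> / 2 * x) ^ n)
      ((\<alpha> / 2) ^ n * (\<Prod>k<n. d + 2 * real k))"
    unfolding chi2_distribution_def
    by (intro has_bochner_integral_density) (auto simp: chi2_density_nonneg[OF d])
  then have "has_bochner_integral (distr M borel Y) (\<lambda>y. y ^ n)
      ((\<alpha> / 2) ^ n * (\<Prod>k<n. d + 2 * real k))"
    unfolding distr_Y by (intro has_bochner_integral_distr) (auto simp: chi2_distribution_def)
  moreover have "(\<alpha> / 2) ^ n * (\<Prod>k<n. d + 2 * real k) = (\<Prod>k<n. \<alpha> * d / 2 + \<alpha> * real k)"
    by (induction n) (auto simp: algebra_simps)
  ultimately show ?thesis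
    using Y by (simp add: has_bochner_integral_iff integrable_distr_eq integral_distr)
qed

lemma (in prob_space) centered_moment:
  fixes Y :: "'a \<Rightarrow> real"
  assumes "\<And>k. k \<le> n \<Longrightarrow> has_bochner_integral M (\<lambda>\<omega>. Y \<omega> ^ k) (m k)"
  shows "has_bochner_integral M (\<lambda>\<omega>. (Y \<omega> - \<mu>) ^ n)
    (\<Sum>k\<le>n. of_nat (n choose k) * m k * (- \<mu>) ^ (n - k))"
proof -
  have "(Y \<omega> - \<mu>) ^ n = (\<Sum>k\<le>n. of_nat (n choose k) * Y \<omega> ^ k * (- \<mu>) ^ (n - k))" for \<omega>
    using binomial_ring[of "Y \<omega>" "- \<mu>" n] by simp
  then show ?thesis
    by (simp only:) (intro has_bochner_integral_sum has_bochner_integral_mult_left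
        has_bochner_integral_mult_right assms; simp)
qed

lemma (in prob_space) cc_moments:
  fixes b :: "nat \<Rightarrow> 'a \<Rightarrow> real"
  assumes \<alpha>: "\<alpha> > 0" and j: "j \<ge> 1" and b: "b j \<in> borel_measurable M"
    and distr_b: "distr M borel (\<lambda>\<omega>. (b j \<omega>)\<^sup>2)
      = distr (chi2_distribution (2 * real j / \<alpha>)) borel (\<lambda>x. \<alpha> / 2 * x)"
  shows "has_bochner_integral M (cc b j) 0"
    and "has_bochner_integral M (\<lambda>\<omega>. (cc b j \<omega>)^2) \<alpha>"
    and "has_bochner_integral M (\<lambda>\<omega>. (cc b j \<omega>)^4) (3 * \<alpha>^2 + 6 * \<alpha>^3 / real j)"
proof -
  have jpos: "real j > 0" using j by simp
  have "has_bochner_integral M (\<lambda>\<omega>. ((b j \<omega>)\<^sup>2) ^ k) (\<Prod>i<k. real j + \<alpha> * real i)" for k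
    using scaled_chi2_moment[OF \<alpha> _ _ distr_b, of k] \<alpha> jpos b by simp
  then have central: "has_bochner_integral M (\<lambda>\<omega>. ((b j \<omega>)\<^sup>2 - real j) ^ n)
      (\<Sum>k\<le>n. of_nat (n choose k) * (\<Prod>i<k. real j + \<alpha> * real i) * (- real j) ^ (n - k))" for n
    by (rule centered_moment)
  have cc_power: "(\<lambda>\<omega>. (cc b j \<omega>) ^ n) = (\<lambda>\<omega>. ((b j \<omega>)\<^sup>2 - real j) ^ n / sqrt (real j) ^ n)" for n
    by (simp add: cc_def power_divide)
  have moment_value: "has_bochner_integral M (\<lambda>\<omega>. (cc b j \<omega>) ^ n) (v / sqrt (real j) ^ n)"
    if "(\<Sum>k\<le>n. of_nat (n choose k) * (\<Prod>i<k. real j + \<alpha> * real i) * (- real j) ^ (n - k)) = v"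
    for n v
    unfolding cc_power using has_bochner_integral_divide_zero[OF central[of n]] that by simp
  have "has_bochner_integral M (\<lambda>\<omega>. (cc b j \<omega>) ^ 1) (0 / sqrt (real j) ^ 1)"
    by (rule moment_value) simp
  then show "has_bochner_integral M (cc b j) 0" by simp
  have "has_bochner_integral M (\<lambda>\<omega>. (cc b j \<omega>) ^ 2) ((\<alpha> * real j) / sqrt (real j) ^ 2)"
    by (rule moment_value) (simp add: eval_nat_numeral lessThan_Suc atMost_Suc algebra_simps)
  then show "has_bochner_integral M (\<lambda>\<omega>. (cc b j \<omega>)^2) \<alpha>" using jpos by simp
  have "has_bochner_integral M (\<lambda>\<omega>. (cc b j \<omega>) ^ 4)
      ((3 * \<alpha>^2 * (real j)^2 + 6 * \<alpha>^3 * real j) / sqrt (real j) ^ 4)"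
    by (rule moment_value) (simp add: eval_nat_numeral lessThan_Suc atMost_Suc algebra_simps)
  moreover have "sqrt (real j) ^ 4 = (real j)^2"
    by (simp add: power4_eq_xxxx power2_eq_square mult.assoc[symmetric])
  then have "(3 * \<alpha>^2 * (real j)^2 + 6 * \<alpha>^3 * real j) / sqrt (real j) ^ 4
      = 3 * \<alpha>^2 + 6 * \<alpha>^3 / real j"
    using jpos by (simp add: field_simps power2_eq_square)
  ultimately show "has_bochner_integral M (\<lambda>\<omega>. (cc b j \<omega>)^4) (3 * \<alpha>^2 + 6 * \<alpha>^3 / real j)"
    by simp
qed

lemma (in prob_space) has_bochner_integral_normal_distributed:
  assumes X: "distributed M lborel X (\<lambda>x. ennreal (normal_density \<mu> \<sigma> x))"
    and g: "g \<in> borel_measurable borel"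
    and I: "has_bochner_integral lborel (\<lambda>x. normal_density \<mu> \<sigma> x * g x) r"
  shows "has_bochner_integral M (\<lambda>\<omega>. g (X \<omega>)) r"
  using distributed_integrable[OF X, of g] distributed_integral[OF X, of g] g I
  by (auto simp: has_bochner_integral_iff)

lemma (in prob_space) normal_moments:
  assumes X: "distributed M lborel X (\<lambda>x. ennreal (normal_density 0 (sqrt \<alpha>) x))"
    and \<alpha>: "\<alpha> > 0"
  shows "has_bochner_integral M X 0"
    and "has_bochner_integral M (\<lambda>\<omega>. (X \<omega>)^2) \<alpha>"
    and "has_bochner_integral M (\<lambda>\<omega>. (X \<omega>)^4) (3 * \<alpha>^2)"
proof -
  have s: "sqrt \<alpha> > 0" using \<alpha> by simp
  show "has_bochner_integral M X 0"
    using has_bochner_integral_normal_distributed[OF X _ normal_moment_odd[OF s, of 0 0]] by simp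
  show "has_bochner_integral M (\<lambda>\<omega>. (X \<omega>)^2) \<alpha>"
    using has_bochner_integral_normal_distributed[OF X _ normal_moment_even[OF s, of 0 1]] \<alpha>
    by (simp add: fact_numeral)
  show "has_bochner_integral M (\<lambda>\<omega>. (X \<omega>)^4) (3 * \<alpha>^2)"
    using has_bochner_integral_normal_distributed[OF X _ normal_moment_even[OF s, of 0 2]] \<alpha>
    by (simp add: fact_numeral power2_eq_square field_simps)
qed

lemma (in prob_space) indep_vars_case_sum_cc:
  assumes "indep_vars (\<lambda>_. borel) (case_sum a b) I"
  shows "indep_vars (\<lambda>_. borel) (case_sum a (cc b)) I"
proof -
  have "case_sum a (cc b)
      = (\<lambda>k \<omega>. case_sum (\<lambda>_ x. x) (\<lambda>j x. (x\<^sup>2 - real j) / sqrt (real j)) k (case_sum a b k \<omega>))"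
    by (auto simp: fun_eq_iff cc_def split: sum.split)
  then show ?thesis
    by (simp only:) (rule indep_vars_compose2[OF assms], auto split: sum.split)
qed

lemma (in prob_space) entry_moments:
  fixes a b :: "nat \<Rightarrow> 'a \<Rightarrow> real"
  assumes \<alpha>: "\<alpha> > 0"
    and a: "\<And>i. i \<ge> 1 \<Longrightarrow> distributed M lborel (a i) (\<lambda>x. ennreal (normal_density 0 (sqrt \<alpha>) x))"
    and b: "\<And>i. i \<ge> 1 \<Longrightarrow> b i \<in> borel_measurable M"
    and distr_b: "\<And>i. i \<ge> 1 \<Longrightarrow> distr M borel (\<lambda>\<omega>. (b i \<omega>)\<^sup>2)
      = distr (chi2_distribution (2 * real i / \<alpha>)) borel (\<lambda>x. \<alpha> / 2 * x)"
    and k: "k \<in> Inl ` {1..} \<union> Inr ` {1..}"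
  shows "has_bochner_integral M (case_sum a (cc b) k) 0"
    and "has_bochner_integral M (\<lambda>\<omega>. (case_sum a (cc b) k \<omega>)^2) \<alpha>"
    and "integrable M (\<lambda>\<omega>. (case_sum a (cc b) k \<omega>)^4)"
    and "expectation (\<lambda>\<omega>. (case_sum a (cc b) k \<omega>)^4) \<le> 3 * \<alpha>^2 + 6 * \<alpha>^3"
proof -
  define m4 where "m4 = case_sum (\<lambda>_. 3 * \<alpha>^2) (\<lambda>j. 3 * \<alpha>^2 + 6 * \<alpha>^3 / real j) k"
  have moments: "has_bochner_integral M (case_sum a (cc b) k) 0
    \<and> has_bochner_integral M (\<lambda>\<omega>. (case_sum a (cc b) k \<omega>)^2) \<alpha>
    \<and> has_bochner_integral M (\<lambda>\<omega>. (case_sum a (cc b) k \<omega>)^4) m4"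
  proof (cases k)
    case (Inl i)
    then have "i \<ge> 1" using k by auto
    then show ?thesis
      using normal_moments[OF a \<alpha>] by (simp add: Inl m4_def)
  next
    case (Inr j)
    then have j: "j \<ge> 1" using k by auto
    show ?thesis
      using cc_moments[where b=b, OF \<alpha> j b[OF j] distr_b[OF j]] by (simp add: Inr m4_def)
  qed
  have "m4 \<le> 3 * \<alpha>^2 + 6 * \<alpha>^3"
    using k \<alpha> by (auto simp: m4_def divide_le_eq mult_le_cancel_left1)
  then show "has_bochner_integral M (case_sum a (cc b) k) 0"
    and "has_bochner_integral M (\<lambda>\<omega>. (case_sum a (cc b) k \<omega>)^2) \<alpha>"
    and "integrable M (\<lambda>\<omega>. (case_sum a (cc b) k \<omega>)^4)"
    and "expectation (\<lambda>\<omega>. (case_sum a (cc b) k \<omega>)^4) \<le> 3 * \<alpha>^2 + 6 * \<alpha>^3"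
    using moments by (auto simp: has_bochner_integral_iff)
qed

section \<open>A central limit theorem for weighted sums\<close>

lemma abs_exp_neg_sub_le:
  fixes x :: real
  assumes "x \<ge> 0"
  shows "\<bar>exp (-x) - (1 - x)\<bar> \<le> x^2 / 2"
proof -
  define f where "f y = 1 - y + y^2/2 - exp (-y)" for y :: real
  have "(f has_real_derivative (-1 + y + exp (-y))) (at y)" for y
    unfolding f_def by (auto intro!: derivative_eq_intros simp: power2_eq_square)
  moreover have "0 \<le> -1 + y + exp (-y)" for y :: real
    using exp_ge_add_one_self[of "-y"] by simp
  ultimately have "f 0 \<le> f x"
    by (intro DERIV_nonneg_imp_nondecreasing[OF assms]) blast
  then show ?thesis
    using exp_ge_add_one_self[of "-x"] by (simp add: f_def abs_if)
qed

lemma abs_cube_le_square_plus_fourth: "\<bar>y\<bar>^3 \<le> y^2 + y^4" for y :: real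
proof (cases "\<bar>y\<bar> \<le> 1")
  case True
  then have "\<bar>y\<bar>^3 \<le> \<bar>y\<bar>^2" by (intro power_decreasing) auto
  moreover have "0 \<le> y^4" by (simp add: zero_le_even_power)
  ultimately show ?thesis by (simp add: add_increasing2)
next
  case False
  then have "\<bar>y\<bar>^3 \<le> \<bar>y\<bar>^4" by (intro power_increasing) auto
  moreover have "\<bar>y\<bar>^4 = y^4" by (simp add: power_abs[symmetric] zero_le_even_power)
  ultimately show ?thesis by (smt (verit) zero_le_power2)
qed

lemma (in prob_space) char_approx_gaussian:
  fixes Z :: "'a \<Rightarrow> real"
  assumes int1: "integrable M Z" and int2: "integrable M (\<lambda>\<omega>. (Z \<omega>)^2)"
    and int3: "integrable M (\<lambda>\<omega>. \<bar>Z \<omega>\<bar>^3)"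
    and mean: "expectation Z = 0" and var: "expectation (\<lambda>\<omega>. (Z \<omega>)^2) = \<sigma>"
    and third: "expectation (\<lambda>\<omega>. \<bar>Z \<omega>\<bar>^3) \<le> \<rho>"
  shows "cmod (char (distr M borel Z) t - exp (- (t^2) * \<sigma> / 2)) \<le> \<bar>t\<bar>^3 * \<rho> / 6 + t^4 * \<sigma>^2 / 8"
proof -
  have Z: "Z \<in> borel_measurable M" using int1 by auto
  have "variance Z = \<sigma>" using mean var by simp
  then have taylor: "cmod (char (distr M borel Z) t - (1 - t^2 * \<sigma> / 2))
      \<le> (t^2 / 6) * expectation (\<lambda>x. min (6 * (Z x)^2) (\<bar>t\<bar> * \<bar>Z x\<bar>^3))"
    using Z int1 int2 mean by (intro char_approx3') auto
  have "integrable M (\<lambda>x. min (6 * (Z x)^2) (\<bar>t\<bar> * \<bar>Z x\<bar>^3))"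
    by (rule Bochner_Integration.integrable_bound[where f="\<lambda>x. 6 * (Z x)^2"]) (use int2 Z in auto)
  then have "expectation (\<lambda>x. min (6 * (Z x)^2) (\<bar>t\<bar> * \<bar>Z x\<bar>^3))
      \<le> expectation (\<lambda>x. \<bar>t\<bar> * \<bar>Z x\<bar>^3)"
    using int3 by (intro integral_mono) auto
  also have "\<dots> \<le> \<bar>t\<bar> * \<rho>" using third by (simp add: mult_left_mono)
  finally have "(t^2 / 6) * expectation (\<lambda>x. min (6 * (Z x)^2) (\<bar>t\<bar> * \<bar>Z x\<bar>^3))
      \<le> \<bar>t\<bar>^3 * \<rho> / 6"
    by (auto intro: mult_left_mono[THEN order.trans]
        simp: power2_eq_square power3_eq_cube abs_mult[symmetric])
  moreover have "(t^2 * \<sigma> / 2)^2 / 2 = t^4 * \<sigma>^2 / 8"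
    by (simp add: power_mult_distrib power2_eq_square power4_eq_xxxx)
  then have "\<bar>(1 - t^2 * \<sigma> / 2) - exp (- (t^2) * \<sigma> / 2)\<bar> \<le> t^4 * \<sigma>^2 / 8"
    using abs_exp_neg_sub_le[of "t^2 * \<sigma> / 2"] var integral_nonneg_AE[of "\<lambda>\<omega>. (Z \<omega>)^2" M]
    by (simp add: abs_minus_commute)
  then have "cmod (complex_of_real (1 - t^2 * \<sigma> / 2) - exp (- (t^2) * \<sigma> / 2)) \<le> t^4 * \<sigma>^2 / 8"
    by (simp only: of_real_diff[symmetric] norm_of_real)
  ultimately show ?thesis
    using taylor norm_triangle_ineq[of "char (distr M borel Z) t - (1 - t^2 * \<sigma> / 2)"
        "complex_of_real (1 - t^2 * \<sigma> / 2) - exp (- (t^2) * \<sigma> / 2)"]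
    by simp
qed

lemma (in prob_space) char_sum_approx:
  fixes Z :: "'i \<Rightarrow> 'a \<Rightarrow> real" and \<sigma> \<rho> :: "'i \<Rightarrow> real"
  assumes indep: "indep_vars (\<lambda>_. borel) Z J"
    and int1: "\<And>k. k \<in> J \<Longrightarrow> integrable M (Z k)"
    and int2: "\<And>k. k \<in> J \<Longrightarrow> integrable M (\<lambda>\<omega>. (Z k \<omega>)^2)"
    and int3: "\<And>k. k \<in> J \<Longrightarrow> integrable M (\<lambda>\<omega>. \<bar>Z k \<omega>\<bar>^3)"
    and mean: "\<And>k. k \<in> J \<Longrightarrow> expectation (Z k) = 0"
    and var: "\<And>k. k \<in> J \<Longrightarrow> expectation (\<lambda>\<omega>. (Z k \<omega>)^2) = \<sigma> k"
    and third: "\<And>k. k \<in> J \<Longrightarrow> expectation (\<lambda>\<omega>. \<bar>Z k \<omega>\<bar>^3) \<le> \<rho> k"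
  shows "cmod (char (distr M borel (\<lambda>\<omega>. \<Sum>k\<in>J. Z k \<omega>)) t - exp (- (t^2) * (\<Sum>k\<in>J. \<sigma> k) / 2))
     \<le> (\<Sum>k\<in>J. \<bar>t\<bar>^3 * \<rho> k / 6 + t^4 * (\<sigma> k)^2 / 8)"
proof -
  have "exp (- (t^2) * (\<Sum>k\<in>J. \<sigma> k) / 2) = (\<Prod>k\<in>J. exp (- (t^2) * \<sigma> k / 2))"
    by (cases "finite J") (simp_all add: exp_sum[symmetric] sum_distrib_left sum_divide_distrib)
  then have "char (distr M borel (\<lambda>\<omega>. \<Sum>k\<in>J. Z k \<omega>)) t - exp (- (t^2) * (\<Sum>k\<in>J. \<sigma> k) / 2)
      = (\<Prod>k\<in>J. char (distr M borel (Z k)) t) - (\<Prod>k\<in>J. complex_of_real (exp (- (t^2) * \<sigma> k / 2)))"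
    by (simp add: char_distr_sum[OF indep])
  also have "cmod \<dots> \<le> (\<Sum>k\<in>J. cmod (char (distr M borel (Z k)) t - exp (- (t^2) * \<sigma> k / 2)))"
  proof (rule norm_prod_diff)
    fix k assume k: "k \<in> J"
    interpret Z: real_distribution "distr M borel (Z k)"
      using int1[OF k] by (intro real_distribution_distr) auto
    show "cmod (char (distr M borel (Z k)) t) \<le> 1" by (rule Z.cmod_char_le_1)
    show "cmod (complex_of_real (exp (- (t^2) * \<sigma> k / 2))) \<le> 1"
      using var[OF k, symmetric] by simp
  qed
  also have "\<dots> \<le> (\<Sum>k\<in>J. \<bar>t\<bar>^3 * \<rho> k / 6 + t^4 * (\<sigma> k)^2 / 8)"
    using int1 int2 int3 mean var third by (intro sum_mono char_approx_gaussian)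
  finally show ?thesis .
qed

lemma (in prob_space) abs_cube_moment_le:
  fixes Y :: "'a \<Rightarrow> real"
  assumes Y: "Y \<in> borel_measurable M"
    and int2: "integrable M (\<lambda>\<omega>. (Y \<omega>)^2)" and int4: "integrable M (\<lambda>\<omega>. (Y \<omega>)^4)"
  shows "integrable M (\<lambda>\<omega>. \<bar>Y \<omega>\<bar>^3)"
    and "expectation (\<lambda>\<omega>. \<bar>Y \<omega>\<bar>^3) \<le> expectation (\<lambda>\<omega>. (Y \<omega>)^2) + expectation (\<lambda>\<omega>. (Y \<omega>)^4)"
proof -
  have "integrable M (\<lambda>\<omega>. (Y \<omega>)^2 + (Y \<omega>)^4)"
    using int2 int4 by simp
  then show int3: "integrable M (\<lambda>\<omega>. \<bar>Y \<omega>\<bar>^3)"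
    by (rule Bochner_Integration.integrable_bound) (use Y abs_cube_le_square_plus_fourth in auto)
  have "expectation (\<lambda>\<omega>. \<bar>Y \<omega>\<bar>^3) \<le> expectation (\<lambda>\<omega>. (Y \<omega>)^2 + (Y \<omega>)^4)"
    by (intro integral_mono int3 Bochner_Integration.integrable_add int2 int4
        abs_cube_le_square_plus_fourth)
  then show "expectation (\<lambda>\<omega>. \<bar>Y \<omega>\<bar>^3) \<le> expectation (\<lambda>\<omega>. (Y \<omega>)^2) + expectation (\<lambda>\<omega>. (Y \<omega>)^4)"
    using int2 int4 by simp
qed

lemma (in prob_space) char_weighted_sum_approx:
  fixes Y :: "'i \<Rightarrow> 'a \<Rightarrow> real" and \<kappa> :: "'i \<Rightarrow> real"
  assumes indep: "indep_vars (\<lambda>_. borel) Y J"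
    and mean: "\<And>k. k \<in> J \<Longrightarrow> has_bochner_integral M (Y k) 0"
    and var: "\<And>k. k \<in> J \<Longrightarrow> has_bochner_integral M (\<lambda>\<omega>. (Y k \<omega>)^2) v"
    and int4: "\<And>k. k \<in> J \<Longrightarrow> integrable M (\<lambda>\<omega>. (Y k \<omega>)^4)"
    and fourth: "\<And>k. k \<in> J \<Longrightarrow> expectation (\<lambda>\<omega>. (Y k \<omega>)^4) \<le> K"
    and small: "\<And>k. k \<in> J \<Longrightarrow> \<bar>\<kappa> k\<bar> \<le> m"
  shows "cmod (char (distr M borel (\<lambda>\<omega>. \<Sum>k\<in>J. \<kappa> k * Y k \<omega>)) t
      - exp (- (t^2) * (v * (\<Sum>k\<in>J. (\<kappa> k)^2)) / 2))
    \<le> (\<bar>t\<bar>^3 * (v + K) / 6 * m + t^4 * v^2 / 8 * m^2) * (\<Sum>k\<in>J. (\<kappa> k)^2)"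
proof -
  have int1: "integrable M (Y k)" and int2: "integrable M (\<lambda>\<omega>. (Y k \<omega>)^2)"
    and E1: "expectation (Y k) = 0" and E2: "expectation (\<lambda>\<omega>. (Y k \<omega>)^2) = v" if "k \<in> J" for k
    using mean[OF that] var[OF that] by (auto simp: has_bochner_integral_iff)
  note cube = abs_cube_moment_le[OF _ int2 int4]
  have E3: "expectation (\<lambda>\<omega>. \<bar>Y k \<omega>\<bar>^3) \<le> v + K" if k: "k \<in> J" for k
    using cube(2)[OF _ k k] int1[OF k] E2[OF k] fourth[OF k] by fastforce
  have indep': "indep_vars (\<lambda>_. borel) (\<lambda>k \<omega>. \<kappa> k * Y k \<omega>) J"
    using indep by (rule indep_vars_compose2[where X=Y]) auto
  have "cmod (char (distr M borel (\<lambda>\<omega>. \<Sum>k\<in>J. \<kappa> k * Y k \<omega>)) t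
      - exp (- (t^2) * (\<Sum>k\<in>J. (\<kappa> k)^2 * v) / 2))
    \<le> (\<Sum>k\<in>J. \<bar>t\<bar>^3 * (\<bar>\<kappa> k\<bar>^3 * (v + K)) / 6 + t^4 * ((\<kappa> k)^2 * v)^2 / 8)"
    using int1 int2 cube(1) E1 E2 E3
    by (intro char_sum_approx[OF indep'])
      (auto simp: power_mult_distrib abs_mult mult_left_mono)
  also have "\<dots> \<le> (\<Sum>k\<in>J. (\<bar>t\<bar>^3 * (v + K) / 6 * m + t^4 * v^2 / 8 * m^2) * (\<kappa> k)^2)"
  proof (rule sum_mono)
    fix k assume k: "k \<in> J"
    have "0 \<le> expectation (\<lambda>\<omega>. (Y k \<omega>)^2)" "0 \<le> expectation (\<lambda>\<omega>. (Y k \<omega>)^4)"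
      by (intro integral_nonneg_AE; simp add: zero_le_even_power)+
    then have "0 \<le> v + K"
      using E2[OF k] fourth[OF k] by linarith
    then have A: "0 \<le> \<bar>t\<bar>^3 * (v + K) / 6"
      by simp
    have "\<bar>\<kappa> k\<bar>^3 \<le> m * (\<kappa> k)^2"
      using mult_right_mono[OF small[OF k], of "(\<kappa> k)^2"]
      by (simp add: power2_eq_square power3_eq_cube)
    moreover have "((\<kappa> k)^2)^2 \<le> m^2 * (\<kappa> k)^2"
      using mult_right_mono[OF power_mono[OF small[OF k], of 2], of "(\<kappa> k)^2"] by simp
    ultimately have "\<bar>t\<bar>^3 * (v + K) / 6 * \<bar>\<kappa> k\<bar>^3 + t^4 * v^2 / 8 * ((\<kappa> k)^2)^2
        \<le> \<bar>t\<bar>^3 * (v + K) / 6 * (m * (\<kappa> k)^2) + t^4 * v^2 / 8 * (m^2 * (\<kappa> k)^2)"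
      using A by (intro add_mono mult_left_mono) (auto simp: zero_le_even_power)
    then show "\<bar>t\<bar>^3 * (\<bar>\<kappa> k\<bar>^3 * (v + K)) / 6 + t^4 * ((\<kappa> k)^2 * v)^2 / 8
        \<le> (\<bar>t\<bar>^3 * (v + K) / 6 * m + t^4 * v^2 / 8 * m^2) * (\<kappa> k)^2"
      by (simp add: algebra_simps)
  qed
  finally show ?thesis
    by (simp add: sum_distrib_left sum_distrib_right mult.commute)
qed

lemma char_tendsto_std_normal:
  fixes \<phi> :: "nat \<Rightarrow> complex" and s B :: "nat \<Rightarrow> real"
  assumes bound: "eventually (\<lambda>N. cmod (\<phi> N - exp (- (t^2) * s N / 2)) \<le> B N) sequentially"
    and B: "B \<longlonglongrightarrow> 0" and s: "s \<longlonglongrightarrow> 1"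
  shows "\<phi> \<longlonglongrightarrow> char std_normal_distribution t"
proof -
  have "(\<lambda>N. \<phi> N - exp (- (t^2) * s N / 2)) \<longlonglongrightarrow> 0"
    by (rule Lim_null_comparison[OF bound B])
  moreover have "(\<lambda>N. complex_of_real (exp (- (t^2) * s N / 2)))
      \<longlonglongrightarrow> complex_of_real (exp (- (t^2) * 1 / 2))"
    by (intro tendsto_intros s) simp
  ultimately have "(\<lambda>N. (\<phi> N - exp (- (t^2) * s N / 2)) + exp (- (t^2) * s N / 2))
      \<longlonglongrightarrow> 0 + complex_of_real (exp (- (t^2) * 1 / 2))"
    by (rule tendsto_add)
  then show ?thesis
    by (simp add: char_std_normal_distribution)
qed

lemma (in prob_space) weighted_sum_weak_conv_std_normal:
  fixes Y :: "'i \<Rightarrow> 'a \<Rightarrow> real" and \<kappa> :: "nat \<Rightarrow> 'i \<Rightarrow> real"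
    and J :: "nat \<Rightarrow> 'i set" and m :: "nat \<Rightarrow> real"
  assumes indep: "indep_vars (\<lambda>_. borel) Y I"
    and J: "\<And>N. finite (J N)" "\<And>N. J N \<subseteq> I"
    and v: "v > 0"
    and mean: "\<And>k. k \<in> I \<Longrightarrow> has_bochner_integral M (Y k) 0"
    and var: "\<And>k. k \<in> I \<Longrightarrow> has_bochner_integral M (\<lambda>\<omega>. (Y k \<omega>)^2) v"
    and int4: "\<And>k. k \<in> I \<Longrightarrow> integrable M (\<lambda>\<omega>. (Y k \<omega>)^4)"
    and fourth: "\<And>k. k \<in> I \<Longrightarrow> expectation (\<lambda>\<omega>. (Y k \<omega>)^4) \<le> K"
    and total_var: "(\<lambda>N. v * (\<Sum>k\<in>J N. (\<kappa> N k)^2)) \<longlonglongrightarrow> 1"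
    and small: "eventually (\<lambda>N. \<forall>k\<in>J N. \<bar>\<kappa> N k\<bar> \<le> m N) sequentially"
    and m: "m \<longlonglongrightarrow> 0"
  shows "weak_conv_m (\<lambda>N. distr M borel (\<lambda>\<omega>. \<Sum>k\<in>J N. \<kappa> N k * Y k \<omega>)) std_normal_distribution"
proof (rule levy_continuity)
  fix N
  have "Y k \<in> borel_measurable M" if "k \<in> J N" for k
    using mean[of k] J(2) that by (auto simp: has_bochner_integral_iff)
  then show "real_distribution (distr M borel (\<lambda>\<omega>. \<Sum>k\<in>J N. \<kappa> N k * Y k \<omega>))"
    by (intro real_distribution_distr borel_measurable_sum borel_measurable_times) auto
next
  show "real_distribution std_normal_distribution" by (rule real_dist_normal_dist)
next
  fix t :: real
  define s where "s N = (\<Sum>k\<in>J N. (\<kappa> N k)^2)" for N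
  have "s \<longlonglongrightarrow> 1 / v"
    using tendsto_divide[OF total_var tendsto_const[of v]] v by (simp add: s_def[abs_def])
  then have "(\<lambda>N. (\<bar>t\<bar>^3 * (v + K) / 6 * m N + t^4 * v^2 / 8 * (m N)^2) * s N)
      \<longlonglongrightarrow> (\<bar>t\<bar>^3 * (v + K) / 6 * 0 + t^4 * v^2 / 8 * 0^2) * (1 / v)"
    by (intro tendsto_intros m)
  moreover have "eventually (\<lambda>N. cmod (char (distr M borel (\<lambda>\<omega>. \<Sum>k\<in>J N. \<kappa> N k * Y k \<omega>)) t
      - exp (- (t^2) * (v * s N) / 2))
      \<le> (\<bar>t\<bar>^3 * (v + K) / 6 * m N + t^4 * v^2 / 8 * (m N)^2) * s N) sequentially"
    using small
  proof eventually_elim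
    case (elim N)
    show ?case
      unfolding s_def using J(2) elim
      by (intro char_weighted_sum_approx indep_vars_subset[OF indep] mean var int4 fourth) auto
  qed
  ultimately show "(\<lambda>N. char (distr M borel (\<lambda>\<omega>. \<Sum>k\<in>J N. \<kappa> N k * Y k \<omega>)) t)
      \<longlonglongrightarrow> char std_normal_distribution t"
    using total_var unfolding s_def by (intro char_tendsto_std_normal) auto
qed

section \<open>The variance as a Riemann sum\<close>

(* By mesh_var_density_eq, h * var_density ((i - 1) * h) is the leading term of the i-th summand of
   weight_var, so weight_var is a Riemann sum for the integral of var_density over [0, 1/theta^2],
   which is limit_var theta. *)
definition var_primitive :: "real \<Rightarrow> real" where
  "var_primitive x = ln (1 + sqrt (1 - x)) - ln (sqrt (1 - x))"

definition var_density :: "real \<Rightarrow> real" where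
  "var_density x = 1 / (2 * (1 + sqrt (1 - x)) * (1 - x))"

lemma var_primitive_deriv:
  assumes "x < 1" shows "(var_primitive has_real_derivative var_density x) (at x)"
proof -
  have p: "1 - x > 0" using assms by simp
  have sp: "sqrt (1 - x) > 0" using p by simp
  have "(var_primitive has_real_derivative
     (1 / (1 + sqrt (1 - x)) * (inverse (sqrt (1 - x)) / 2 * (-1))
         - 1 / sqrt (1 - x) * (inverse (sqrt (1 - x)) / 2 * (-1)))) (at x)"
    unfolding var_primitive_def
    using p sp
    by (auto intro!: derivative_eq_intros simp: add_pos_pos)
  moreover have "(1 / (1 + sqrt (1 - x)) * (inverse (sqrt (1 - x)) / 2 * (-1))
      - 1 / sqrt (1 - x) * (inverse (sqrt (1 - x)) / 2 * (-1)))
     = var_density x"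
  proof -
    define u where "u = sqrt (1 - x)"
    have uu: "u * u = 1 - x" using p by (simp add: u_def)
    have "(1 / (1 + u) * (inverse u / 2 * (-1)) - 1 / u * (inverse u / 2 * (-1)))
        = 1 / (2 * (1 + u) * (u * u))"
      using sp unfolding u_def[symmetric] by (simp add: inverse_eq_divide) (simp add: divide_simps)
    then show ?thesis unfolding var_density_def u_def[symmetric] uu .
  qed
  ultimately show ?thesis by simp
qed

lemma var_density_mono: "a \<le> b \<Longrightarrow> b < 1 \<Longrightarrow> var_density a \<le> var_density b"
proof -
  assume ab: "a \<le> b" "b < 1"
  have b1: "b \<le> 1" "a \<le> 1" "0 \<le> 1 - b" using ab by auto
  have "sqrt (1 - b) \<le> sqrt (1 - a)" using ab by simp
  moreover have "sqrt (1 - b) \<ge> 0" using b1 by simp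
  ultimately have "2 * (1 + sqrt (1 - b)) * (1 - b) \<le> 2 * (1 + sqrt (1 - a)) * (1 - a)"
    using ab b1 by (intro mult_mono) auto
  moreover have "2 * (1 + sqrt (1 - b)) * (1 - b) > 0" using ab by (simp add: add_pos_nonneg)
  ultimately show "var_density a \<le> var_density b" unfolding var_density_def by (simp add: frac_le)
qed

lemma var_density_nonneg: "x < 1 \<Longrightarrow> var_density x \<ge> 0"
  unfolding var_density_def by (simp add: add_pos_nonneg less_imp_le)

lemma var_primitive_increment:
  assumes "a \<le> b" "b < 1"
  shows "(b - a) * var_density a \<le> var_primitive b - var_primitive a"
    and "var_primitive b - var_primitive a \<le> (b - a) * var_density b"
proof -
  have "(b - a) * var_density a \<le> var_primitive b - var_primitive a
      \<and> var_primitive b - var_primitive a \<le> (b - a) * var_density b"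
  proof (cases "a = b")
    case True then show ?thesis by simp
  next
    case False
    then have lt: "a < b" using assms by simp
    obtain z where z: "a < z" "z < b" "var_primitive b - var_primitive a = (b - a) * var_density z"
      using MVT2[OF lt, of var_primitive var_density] var_primitive_deriv assms by force
    have "var_density a \<le> var_density z" "var_density z \<le> var_density b"
      using z assms by (auto intro!: var_density_mono)
    then show ?thesis using z lt by (auto intro: mult_left_mono)
  qed
  then show "(b - a) * var_density a \<le> var_primitive b - var_primitive a"
    and "var_primitive b - var_primitive a \<le> (b - a) * var_density b"
    by auto
qed

lemma var_primitive_mono: "a \<le> b \<Longrightarrow> b < 1 \<Longrightarrow> var_primitive a \<le> var_primitive b"
  using var_primitive_increment(1)[of a b] var_density_nonneg[of a]
  by (smt (verit) mult_nonneg_nonneg)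

lemma var_primitive_0: "var_primitive 0 = ln 2" by (simp add: var_primitive_def)

lemma var_primitive_half_le: "var_primitive (1/2) \<le> 2"
proof -
  have s: "sqrt (1/2 :: real) = 1 / sqrt 2" by (simp add: real_sqrt_divide)
  have l: "ln (1 / sqrt 2 :: real) = - ln (sqrt 2)" by (simp add: ln_div)
  have s2: "sqrt 2 \<le> (2::real)" by (simp add: real_sqrt_le_iff[of 2 4, simplified] )
  have "var_primitive (1/2) = ln (1 + 1/sqrt 2) + ln (sqrt 2)"
    by (simp add: var_primitive_def s l)
  also have "\<dots> \<le> ln 2 + ln 2"
  proof (intro add_mono)
    have "1 \<le> sqrt (2::real)" by simp
    then have "1 / sqrt 2 \<le> (1::real)" by simp
    moreover have "0 < 1 + 1 / sqrt (2::real)" by (simp add: add_pos_pos)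
    ultimately show "ln (1 + 1 / sqrt 2) \<le> ln (2::real)" by (subst ln_le_cancel_iff) auto
    show "ln (sqrt 2) \<le> ln (2::real)" using s2 by (subst ln_le_cancel_iff) auto
  qed
  also have "\<dots> \<le> 2" using ln_2_less_1 by simp
  finally show ?thesis .
qed

lemma riemann_sum_var_density_upper:
  fixes h :: real assumes h: "h > 0" and m: "1 \<le> m" "m \<le> n" and lt: "real n * h < 1"
  shows "(\<Sum>i=m..n. h * var_density ((real i - 1) * h))
      \<le> var_primitive (real n * h) - var_primitive ((real m - 1) * h)"
proof -
  have "(\<Sum>i=m..n. h * var_density ((real i - 1) * h))
      \<le> (\<Sum>i=m..n. var_primitive ((real (Suc i) - 1) * h) - var_primitive ((real i - 1) * h))"
  proof (intro sum_mono)
    fix i assume i: "i \<in> {m..n}"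
    have "real i * h \<le> real n * h" using i h by (auto intro: mult_right_mono)
    then have "(real (Suc i) - 1) * h < 1" using lt by simp
    moreover have "(real (Suc i) - 1) * h - (real i - 1) * h = h" by (simp add: algebra_simps)
    ultimately show "h * var_density ((real i - 1) * h)
        \<le> var_primitive ((real (Suc i) - 1) * h) - var_primitive ((real i - 1) * h)"
      using var_primitive_increment(1)[of "(real i - 1) * h" "(real (Suc i) - 1) * h"] h
      by (simp add: algebra_simps)
  qed
  also have "\<dots> = var_primitive ((real (Suc n) - 1) * h) - var_primitive ((real m - 1) * h)"
    using m by (subst sum_Suc_diff[where f="\<lambda>i. var_primitive ((real i - 1) * h)"]) auto
  finally show ?thesis by simp
qed

lemma riemann_sum_var_density_lower:
  fixes h :: real assumes h: "h > 0" and m: "2 \<le> m" "m \<le> n" and lt: "real n * h < 1"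
  shows "var_primitive ((real n - 1) * h) - var_primitive ((real m - 2) * h)
      \<le> (\<Sum>i=m..n. h * var_density ((real i - 1) * h))"
proof -
  have "(\<Sum>i=m..n. var_primitive ((real i - 1) * h) - var_primitive ((real (i - 1) - 1) * h))
      \<le> (\<Sum>i=m..n. h * var_density ((real i - 1) * h))"
  proof (intro sum_mono)
    fix i assume i: "i \<in> {m..n}"
    have "real i * h \<le> real n * h" using i h by (auto intro: mult_right_mono)
    moreover have "(real i - 1) * h = real i * h - h" by (simp add: algebra_simps)
    ultimately have "(real i - 1) * h < 1" using lt h by linarith
    moreover have "real (i - 1) = real i - 1" using i m by auto
    ultimately show "var_primitive ((real i - 1) * h) - var_primitive ((real (i - 1) - 1) * h)
        \<le> h * var_density ((real i - 1) * h)"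
      using var_primitive_increment(2)[of "(real i - 1 - 1) * h" "(real i - 1) * h"] h
      by (simp add: algebra_simps)
  qed
  moreover have "(\<Sum>i=m..n. var_primitive ((real i - 1) * h)
      - var_primitive ((real (i - 1) - 1) * h))
      = (\<Sum>i=m-1..n-1. var_primitive ((real (Suc i) - 1) * h) - var_primitive ((real i - 1) * h))"
  proof -
    have "(\<Sum>i=m-1..n-1. var_primitive ((real (Suc i) - 1) * h) - var_primitive ((real i - 1) * h))
        = (\<Sum>i\<in>Suc ` {m-1..n-1}. var_primitive ((real i - 1) * h)
            - var_primitive ((real (i - 1) - 1) * h))"
      by (subst sum.reindex) auto
    also have "Suc ` {m-1..n-1} = {m..n}"
      using m by (auto simp: image_iff intro!: bexI[of _ "_ - 1"])
    finally show ?thesis by simp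
  qed
  moreover have "(\<Sum>i=m-1..n-1. var_primitive ((real (Suc i) - 1) * h)
      - var_primitive ((real i - 1) * h))
     = var_primitive ((real (Suc (n-1)) - 1) * h) - var_primitive ((real (m-1) - 1) * h)"
    using m by (intro sum_Suc_diff) auto
  moreover have "real (Suc (n-1)) = real n" "real (m-1) - 1 = real m - 2" using m by auto
  ultimately show ?thesis by simp
qed

definition limit_var :: "real \<Rightarrow> real" where
  "limit_var \<theta> = var_primitive (1 / \<theta>\<^sup>2) - ln 2"

lemma limit_var_eq:
  assumes th: "\<theta> > 1"
  shows "limit_var \<theta> = ln ((\<theta> + sqrt (\<theta>\<^sup>2 - 1)) / (2 * sqrt (\<theta>\<^sup>2 - 1)))"
proof -
  have t2: "\<theta>\<^sup>2 > 1" using th by (simp add: one_less_power)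
  define w where "w = sqrt (\<theta>\<^sup>2 - 1)"
  have w: "w > 0" using t2 by (simp add: w_def)
  have u: "sqrt (1 - 1 / \<theta>\<^sup>2) = w / \<theta>"
  proof -
    have "1 - 1 / \<theta>\<^sup>2 = (\<theta>\<^sup>2 - 1) / \<theta>\<^sup>2" using th by (simp add: field_simps)
    then show ?thesis using th by (simp add: w_def real_sqrt_divide)
  qed
  have "limit_var \<theta> = ln (1 + w / \<theta>) - ln (w / \<theta>) - ln 2"
    by (simp add: limit_var_def var_primitive_def u)
  also have "\<dots> = ln ((1 + w / \<theta>) / (2 * (w / \<theta>)))"
  proof -
    have p1: "1 + w / \<theta> > 0" using w th by (simp add: add_pos_pos)
    have p2: "w / \<theta> > 0" using w th by simp
    have "ln ((1 + w / \<theta>) / (2 * (w / \<theta>))) = ln (1 + w / \<theta>) - ln (2 * (w / \<theta>))"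
      using p1 p2 by (intro ln_divide_pos) auto
    also have "ln (2 * (w / \<theta>)) = ln 2 + ln (w / \<theta>)" using p2 by (intro ln_mult_pos) auto
    finally show ?thesis by simp
  qed
  also have "(1 + w / \<theta>) / (2 * (w / \<theta>)) = (\<theta> + w) / (2 * w)"
    using th w by (simp add: field_simps)
  finally show ?thesis by (simp add: w_def)
qed

section \<open>The weights of the recursion\<close>

definition sroot :: "real \<Rightarrow> nat \<Rightarrow> nat \<Rightarrow> real" where
  "sroot \<theta> N i = sqrt (1 - (real i - 1) / (real N * \<theta>\<^sup>2))"

(* The fixed point of f = 1 + gam i * f; since gam varies slowly, L_weight i N stays close to it. *)
definition gam_fixpoint :: "real \<Rightarrow> nat \<Rightarrow> nat \<Rightarrow> real" where
  "gam_fixpoint \<theta> N i = (1 + sroot \<theta> N i) / (2 * sroot \<theta> N i)"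

definition L_weight :: "real \<Rightarrow> nat \<Rightarrow> nat \<Rightarrow> nat \<Rightarrow> real" where
  "L_weight \<theta> N i n = (\<Sum>j=i..n. \<Prod>k=Suc i..j. gam \<theta> N k)"

definition mesh :: "real \<Rightarrow> nat \<Rightarrow> real" where
  "mesh \<theta> N = 1 / (real N * \<theta>\<^sup>2)"

(* Bounds the increments of gam_fixpoint and the relative increments of rr between neighbours. *)
definition delta :: "real \<Rightarrow> nat \<Rightarrow> real" where
  "delta \<theta> N = mesh \<theta> N / (sroot \<theta> N N)^3"

lemma rr_sroot: "rr \<theta> N i = 1 + sroot \<theta> N i" by (simp add: rr_def sroot_def)
lemma mm_sroot: "mm \<theta> N i = 1 - sroot \<theta> N i" by (simp add: mm_def sroot_def)
lemma mm_eq_2_minus_rr: "mm \<theta> N i = 2 - rr \<theta> N i" by (simp add: rr_sroot mm_sroot)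
lemma sroot_antimono: "i \<le> j \<Longrightarrow> sroot \<theta> N j \<le> sroot \<theta> N i"
  unfolding sroot_def by (auto intro!: divide_right_mono simp: zero_le_mult_iff)
lemma L_weight_self: "L_weight \<theta> N i i = 1"
  by (simp add: L_weight_def)

lemma L_weight_rec:
  assumes "i < n"
  shows "L_weight \<theta> N i n = 1 + gam \<theta> N (Suc i) * L_weight \<theta> N (Suc i) n"
proof -
  have "L_weight \<theta> N i n = (\<Prod>k=Suc i..i. gam \<theta> N k) + (\<Sum>j=Suc i..n. \<Prod>k=Suc i..j. gam \<theta> N k)"
    unfolding L_weight_def using assms by (subst sum.atLeast_Suc_atMost) auto
  also have "(\<Sum>j=Suc i..n. \<Prod>k=Suc i..j. gam \<theta> N k)
      = (\<Sum>j=Suc i..n. gam \<theta> N (Suc i) * (\<Prod>k=Suc (Suc i)..j. gam \<theta> N k))"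
    by (intro sum.cong refl) (subst prod.atLeast_Suc_atMost, auto)
  finally show ?thesis by (simp add: L_weight_def sum_distrib_left)
qed

definition a_coef :: "real \<Rightarrow> nat \<Rightarrow> nat \<Rightarrow> real" where
  "a_coef \<theta> N i = 1 / (sqrt (real N) * \<theta> * rr \<theta> N i)"

definition c_coef :: "real \<Rightarrow> nat \<Rightarrow> nat \<Rightarrow> real" where
  "c_coef \<theta> N i = sqrt (mm \<theta> N i / rr \<theta> N i) / (sqrt (real N) * \<theta> * rr \<theta> N (i - 1))"

definition weight_var :: "real \<Rightarrow> nat \<Rightarrow> real" where
  "weight_var \<theta> N = (\<Sum>i=3..N. ((a_coef \<theta> N i)\<^sup>2 + (c_coef \<theta> N i)\<^sup>2) * (L_weight \<theta> N i N)\<^sup>2)"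

definition weight_defect :: "real \<Rightarrow> nat \<Rightarrow> nat \<Rightarrow> real" where
  "weight_defect \<theta> N i = (gam_fixpoint \<theta> N N - 1) * (\<Prod>k=Suc i..N. gam \<theta> N k)"

locale grid =
  fixes \<theta> :: real and N :: nat
  assumes th: "\<theta> > 1" and N3: "N \<ge> 3"
begin

lemma mesh_pos: "mesh \<theta> N > 0" using th N3 by (simp add: mesh_def)
lemma N_mesh: "real N * mesh \<theta> N = 1 / \<theta>\<^sup>2" using N3 by (simp add: mesh_def)
lemma N_mesh_lt_1: "real N * mesh \<theta> N < 1" using th by (simp add: N_mesh)

lemma sroot_sq: "i \<le> N \<Longrightarrow> (sroot \<theta> N i)\<^sup>2 = 1 - (real i - 1) * mesh \<theta> N"
proof -
  assume i: "i \<le> N"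
  have "(real i - 1) * mesh \<theta> N \<le> real N * mesh \<theta> N"
    using i mesh_pos by (intro mult_right_mono) auto
  then have "(real i - 1) * mesh \<theta> N < 1" using N_mesh_lt_1 by linarith
  then show ?thesis by (simp add: sroot_def mesh_def)
qed

lemma sroot_pos: "i \<le> N \<Longrightarrow> sroot \<theta> N i > 0"
proof -
  assume i: "i \<le> N"
  have "(real i - 1) * mesh \<theta> N \<le> real N * mesh \<theta> N"
    using i mesh_pos by (intro mult_right_mono) auto
  then have "(real i - 1) * mesh \<theta> N < 1" using N_mesh_lt_1 by linarith
  then show ?thesis by (simp add: sroot_def mesh_def)
qed

lemma sroot_le_1: "1 \<le> i \<Longrightarrow> sroot \<theta> N i \<le> 1"
  unfolding sroot_def using th by (auto simp: zero_le_mult_iff)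

lemma sroot_N_pos: "sroot \<theta> N N > 0" by (rule sroot_pos) simp
lemma sroot_N_le: "i \<le> N \<Longrightarrow> sroot \<theta> N N \<le> sroot \<theta> N i" by (rule sroot_antimono)
lemma sroot_N_le_1: "sroot \<theta> N N \<le> 1" using N3 by (intro sroot_le_1) simp

lemma gam_sroot: "gam \<theta> N i = (1 - sroot \<theta> N i) / (1 + sroot \<theta> N i)"
  by (simp add: gam_def rr_sroot mm_sroot)

lemma gam_nonneg: "1 \<le> i \<Longrightarrow> i \<le> N \<Longrightarrow> 0 \<le> gam \<theta> N i"
  using sroot_pos[of i] sroot_le_1[of i] by (simp add: gam_sroot)

lemma gam_mono: "i \<le> j \<Longrightarrow> j \<le> N \<Longrightarrow> gam \<theta> N i \<le> gam \<theta> N j"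
proof -
  assume ij: "i \<le> j" "j \<le> N"
  have a: "sroot \<theta> N j \<le> sroot \<theta> N i" using ij(1) by (rule sroot_antimono)
  have b: "sroot \<theta> N j > 0" using ij by (intro sroot_pos) auto
  have "(1 - sroot \<theta> N i) * (1 + sroot \<theta> N j) \<le> (1 - sroot \<theta> N j) * (1 + sroot \<theta> N i)"
    using a by (simp add: algebra_simps)
  then show ?thesis using a b by (simp add: gam_sroot divide_simps add_pos_pos)
qed

lemma gam_fixpoint_eq: "i \<le> N \<Longrightarrow> gam \<theta> N i * gam_fixpoint \<theta> N i = gam_fixpoint \<theta> N i - 1"
proof -
  assume i: "i \<le> N"
  define s where "s = sroot \<theta> N i"
  have s: "s > 0" "1 + s \<noteq> 0" using sroot_pos[OF i] by (auto simp: s_def)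
  have "(1 - s) / (1 + s) * ((1 + s) / (2 * s)) = (1 - s) / (2 * s)"
    using s by simp
  also have "\<dots> = (1 + s) / (2 * s) - 1"
    using s by (simp add: divide_simps)
  finally have "(1 - s) / (1 + s) * ((1 + s) / (2 * s)) = (1 + s) / (2 * s) - 1" .
  then show ?thesis by (simp add: gam_sroot gam_fixpoint_def s_def)
qed

lemma gam_fixpoint_ge_1: "1 \<le> i \<Longrightarrow> i \<le> N \<Longrightarrow> gam_fixpoint \<theta> N i \<ge> 1"
  using sroot_pos[of i] sroot_le_1[of i] by (simp add: gam_fixpoint_def field_simps)

lemma gam_fixpoint_le: "1 \<le> i \<Longrightarrow> i \<le> N \<Longrightarrow> gam_fixpoint \<theta> N i \<le> 1 / sroot \<theta> N N"
proof -
  assume i: "1 \<le> i" "i \<le> N"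
  have "gam_fixpoint \<theta> N i \<le> 1 / sroot \<theta> N i"
    using sroot_pos[of i] sroot_le_1[of i] i by (simp add: gam_fixpoint_def field_simps)
  also have "\<dots> \<le> 1 / sroot \<theta> N N" using sroot_N_le[of i] sroot_N_pos i by (simp add: frac_le)
  finally show ?thesis .
qed

lemma gam_fixpoint_mono: "i \<le> j \<Longrightarrow> j \<le> N \<Longrightarrow> gam_fixpoint \<theta> N i \<le> gam_fixpoint \<theta> N j"
proof -
  assume ij: "i \<le> j" "j \<le> N"
  have a: "sroot \<theta> N j \<le> sroot \<theta> N i" using ij(1) by (rule sroot_antimono)
  have b: "sroot \<theta> N j > 0" using ij by (intro sroot_pos) auto
  have "gam_fixpoint \<theta> N i = 1/2 + 1 / (2 * sroot \<theta> N i)"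
    and "gam_fixpoint \<theta> N j = 1/2 + 1 / (2 * sroot \<theta> N j)"
    using b a by (auto simp: gam_fixpoint_def field_simps)
  moreover have "1 / (2 * sroot \<theta> N i) \<le> 1 / (2 * sroot \<theta> N j)" using a b by (simp add: frac_le)
  ultimately show ?thesis by simp
qed

lemma sroot_step:
  assumes i: "1 \<le> i" "i < N"
  shows "sroot \<theta> N i - sroot \<theta> N (Suc i) \<le> mesh \<theta> N / (2 * sroot \<theta> N N)"
proof -
  define a where "a = sroot \<theta> N i"
  define b where "b = sroot \<theta> N (Suc i)"
  have ap: "a > 0" "b > 0" using i by (auto simp: a_def b_def intro!: sroot_pos)
  have ab: "a\<^sup>2 - b\<^sup>2 = mesh \<theta> N" using i by (simp add: a_def b_def sroot_sq algebra_simps)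
  have "a - b = (a\<^sup>2 - b\<^sup>2) / (a + b)" using ap by (simp add: power2_eq_square field_simps)
  also have "\<dots> = mesh \<theta> N / (a + b)" by (simp add: ab)
  also have "\<dots> \<le> mesh \<theta> N / (2 * sroot \<theta> N N)"
    using sroot_N_le[of i] sroot_N_le[of "Suc i"] i sroot_N_pos mesh_pos unfolding a_def b_def
    by (intro divide_left_mono) auto
  finally show ?thesis by (simp add: a_def b_def)
qed

lemma gam_fixpoint_step:
  assumes i: "1 \<le> i" "i < N"
  shows "gam_fixpoint \<theta> N (Suc i) - gam_fixpoint \<theta> N i \<le> delta \<theta> N"
proof -
  define a where "a = sroot \<theta> N i"
  define b where "b = sroot \<theta> N (Suc i)"
  define c where "c = sroot \<theta> N N"
  have ap: "a > 0" "b > 0" "c > 0" using i by (auto simp: a_def b_def c_def intro!: sroot_pos)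
  have ca: "c \<le> a" "c \<le> b" using i by (auto simp: a_def b_def c_def intro!: sroot_N_le)
  have st: "a - b \<le> mesh \<theta> N / (2 * c)" using sroot_step[OF i] by (simp add: a_def b_def c_def)
  have "gam_fixpoint \<theta> N (Suc i) - gam_fixpoint \<theta> N i = (a - b) / (2 * a * b)"
    using ap by (simp add: gam_fixpoint_def a_def[symmetric] b_def[symmetric] field_simps)
  also have "\<dots> \<le> (mesh \<theta> N / (2 * c)) / (2 * a * b)"
    using st ap by (intro divide_right_mono) auto
  also have "\<dots> \<le> (mesh \<theta> N / (2 * c)) / (2 * c * c)"
    using ap ca mesh_pos by (intro divide_left_mono mult_mono) auto
  also have "\<dots> \<le> mesh \<theta> N / c^3"
    using ap mesh_pos by (simp add: field_simps power3_eq_cube)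
  finally show ?thesis by (simp add: delta_def c_def)
qed

lemma L_weight_upper:
  assumes d: "delta \<theta> N < 1" and i: "1 \<le> i" "i \<le> N"
  shows "L_weight \<theta> N i N \<le> gam_fixpoint \<theta> N i / (1 - delta \<theta> N)"
  using i(2,1)
proof (induction i rule: inc_induct)
  case base
  have "delta \<theta> N \<ge> 0" using mesh_pos sroot_N_pos by (simp add: delta_def)
  then have "1 - delta \<theta> N \<le> gam_fixpoint \<theta> N N" using gam_fixpoint_ge_1[of N] N3 by simp
  then have "1 \<le> gam_fixpoint \<theta> N N / (1 - delta \<theta> N)"
    using d by (simp add: le_divide_eq)
  then show ?case by (simp add: L_weight_self)
next
  case (step n)
  have g0: "0 \<le> gam \<theta> N (Suc n)" using step by (intro gam_nonneg) auto
  have "L_weight \<theta> N n N = 1 + gam \<theta> N (Suc n) * L_weight \<theta> N (Suc n) N"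
    using step by (intro L_weight_rec) auto
  also have "\<dots> \<le> 1 + gam \<theta> N (Suc n) * (gam_fixpoint \<theta> N (Suc n) / (1 - delta \<theta> N))"
    using step g0 by (intro add_left_mono mult_left_mono) auto
  also have "\<dots> = 1 + (gam_fixpoint \<theta> N (Suc n) - 1) / (1 - delta \<theta> N)"
    using gam_fixpoint_eq[of "Suc n"] step
    by (simp add: mult.assoc[symmetric] times_divide_eq_right[symmetric])
  also have "\<dots> = (gam_fixpoint \<theta> N (Suc n) - delta \<theta> N) / (1 - delta \<theta> N)"
    using d by (simp add: field_simps)
  also have "\<dots> \<le> gam_fixpoint \<theta> N n / (1 - delta \<theta> N)"
    using gam_fixpoint_step[of n] step d by (intro divide_right_mono) auto
  finally show ?case .
qed

lemma L_weight_nonneg: "1 \<le> i \<Longrightarrow> n \<le> N \<Longrightarrow> 0 \<le> L_weight \<theta> N i n"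
  unfolding L_weight_def
  by (intro sum_nonneg prod_nonneg) (auto intro!: gam_nonneg)

lemma L_weight_lower:
  assumes i: "1 \<le> i" "i \<le> N"
  shows "gam_fixpoint \<theta> N i - (gam_fixpoint \<theta> N N - 1) * (\<Prod>k=Suc i..N. gam \<theta> N k)
      \<le> L_weight \<theta> N i N"
  using i(2,1)
proof (induction i rule: inc_induct)
  case base
  then show ?case by (simp add: L_weight_self)
next
  case (step n)
  have g0: "0 \<le> gam \<theta> N (Suc n)" using step by (intro gam_nonneg) auto
  have "gam_fixpoint \<theta> N n - (gam_fixpoint \<theta> N N - 1) * (\<Prod>k=Suc n..N. gam \<theta> N k)
     \<le> gam_fixpoint \<theta> N (Suc n) - (gam_fixpoint \<theta> N N - 1)
         * (gam \<theta> N (Suc n) * (\<Prod>k=Suc (Suc n)..N. gam \<theta> N k))"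
    using gam_fixpoint_mono[of n "Suc n"] step by (subst prod.atLeast_Suc_atMost) auto
  also have "\<dots> = 1 + gam \<theta> N (Suc n) * (gam_fixpoint \<theta> N (Suc n)
      - (gam_fixpoint \<theta> N N - 1) * (\<Prod>k=Suc (Suc n)..N. gam \<theta> N k))"
    using gam_fixpoint_eq[of "Suc n"] step by (simp add: algebra_simps)
  also have "\<dots> \<le> 1 + gam \<theta> N (Suc n) * L_weight \<theta> N (Suc n) N"
    using step g0 by (intro add_left_mono mult_left_mono) auto
  also have "\<dots> = L_weight \<theta> N n N" using step by (intro L_weight_rec[symmetric]) auto
  finally show ?case .
qed

lemma prod_gam_le: "1 \<le> i \<Longrightarrow> i \<le> N \<Longrightarrow> (\<Prod>k=Suc i..N. gam \<theta> N k) \<le> gam \<theta> N N ^ (N - i)"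
proof -
  assume i: "1 \<le> i" "i \<le> N"
  have "(\<Prod>k=Suc i..N. gam \<theta> N k) \<le> (\<Prod>k=Suc i..N. gam \<theta> N N)"
    using i by (intro prod_mono) (auto intro!: gam_nonneg gam_mono)
  also have "\<dots> = gam \<theta> N N ^ (N - i)" by simp
  finally show ?thesis .
qed

lemma gam_N_lt_1: "gam \<theta> N N < 1"
  using sroot_N_pos by (simp add: gam_sroot)

lemma sum_gam_N_powers_le: "(\<Sum>i=3..N. gam \<theta> N N ^ (N - i)) \<le> 1 / sroot \<theta> N N"
proof -
  define g where "g = gam \<theta> N N"
  have g: "0 \<le> g" "g < 1" using gam_N_lt_1 gam_nonneg[of N] N3 by (auto simp: g_def)
  have "(\<Sum>i=3..N. g ^ (N - i)) = (\<Sum>k\<in>(\<lambda>i. N - i) ` {3..N}. g ^ k)"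
    by (subst sum.reindex) (auto simp: inj_on_def)
  also have "\<dots> \<le> (\<Sum>k<N. g ^ k)"
    using g by (intro sum_mono2) auto
  also have "\<dots> = (1 - g ^ N) / (1 - g)" using g by (simp add: sum_gp_strict)
  also have "\<dots> \<le> 1 / (1 - g)" using g by (intro divide_right_mono) auto
  also have "1 / (1 - g) = (1 + sroot \<theta> N N) / (2 * sroot \<theta> N N)"
    using sroot_N_pos by (simp add: g_def gam_sroot field_simps)
  also have "\<dots> \<le> 1 / sroot \<theta> N N"
    using sroot_N_pos sroot_N_le_1 by (simp add: field_simps)
  finally show ?thesis by (simp add: g_def)
qed

lemma delta_nonneg: "delta \<theta> N \<ge> 0" using mesh_pos sroot_N_pos by (simp add: delta_def)

lemma rr_ge_1: "i \<le> N \<Longrightarrow> rr \<theta> N i \<ge> 1" using sroot_pos[of i] by (simp add: rr_sroot)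
lemma mm_div_rr_nonneg: "1 \<le> i \<Longrightarrow> i \<le> N \<Longrightarrow> mm \<theta> N i / rr \<theta> N i \<ge> 0"
  using sroot_pos[of i] sroot_le_1[of i] by (simp add: rr_sroot mm_sroot)

lemma sqrt_N_mult_theta_sq: "(sqrt (real N) * \<theta>)\<^sup>2 = 1 / mesh \<theta> N"
  using N3 by (simp add: mesh_def power_mult_distrib)

lemma a_coef_sq: "i \<le> N \<Longrightarrow> (a_coef \<theta> N i)\<^sup>2 = mesh \<theta> N / (rr \<theta> N i)\<^sup>2"
  using N3 by (simp add: a_coef_def mesh_def power_divide power_mult_distrib)

lemma c_coef_sq:
  assumes i: "3 \<le> i" "i \<le> N"
  shows "(c_coef \<theta> N i)\<^sup>2 = (mm \<theta> N i / rr \<theta> N i) * mesh \<theta> N / (rr \<theta> N (i - 1))\<^sup>2"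
proof -
  have "(c_coef \<theta> N i)\<^sup>2 = (mm \<theta> N i / rr \<theta> N i) / ((sqrt (real N) * \<theta>)\<^sup>2 * (rr \<theta> N (i - 1))\<^sup>2)"
    using mm_div_rr_nonneg[of i] i by (simp add: c_coef_def power_divide power_mult_distrib)
  then show ?thesis using sqrt_N_mult_theta_sq mesh_pos by simp
qed

lemma mesh_var_density_eq:
  assumes i: "i \<le> N"
  shows "mesh \<theta> N * var_density ((real i - 1) * mesh \<theta> N)
    = 2 * mesh \<theta> N / (rr \<theta> N i)^3 * (gam_fixpoint \<theta> N i)\<^sup>2"
proof -
  define s where "s = sroot \<theta> N i"
  have s: "s > 0" using sroot_pos[OF i] by (simp add: s_def)
  have e1: "sqrt (1 - (real i - 1) * mesh \<theta> N) = s" by (simp add: s_def sroot_def mesh_def)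
  have e2: "1 - (real i - 1) * mesh \<theta> N = s\<^sup>2" using sroot_sq[OF i] by (simp add: s_def)
  have "var_density ((real i - 1) * mesh \<theta> N) = 1 / (2 * (1 + s) * s\<^sup>2)"
    unfolding var_density_def by (subst e1, subst e2, rule refl)
  moreover have "2 / t^3 * (t / (2 * s))\<^sup>2 = 1 / (2 * t * s\<^sup>2)" if "t > 0" for t :: real
    using that s by (simp add: power2_eq_square power3_eq_cube field_simps)
  then have "2 / (1 + s)^3 * ((1 + s) / (2 * s))\<^sup>2 = 1 / (2 * (1 + s) * s\<^sup>2)"
    using s by simp
  ultimately have "mesh \<theta> N * var_density ((real i - 1) * mesh \<theta> N)
      = mesh \<theta> N * (2 / (1 + s)^3 * ((1 + s) / (2 * s))\<^sup>2)"
    by simp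
  also have "\<dots> = 2 * mesh \<theta> N / (1 + s)^3 * ((1 + s) / (2 * s))\<^sup>2"
    by (simp add: times_divide_eq_left times_divide_eq_right)
  finally show ?thesis by (simp add: rr_sroot gam_fixpoint_def s_def[symmetric])
qed

lemma rr_pred:
  assumes i: "3 \<le> i" "i \<le> N"
  shows "rr \<theta> N i \<le> rr \<theta> N (i - 1)" "rr \<theta> N (i - 1) \<le> rr \<theta> N i * (1 + delta \<theta> N)"
proof -
  show "rr \<theta> N i \<le> rr \<theta> N (i - 1)" by (simp add: rr_sroot sroot_antimono)
  have st: "sroot \<theta> N (i - 1) - sroot \<theta> N (Suc (i - 1)) \<le> mesh \<theta> N / (2 * sroot \<theta> N N)"
    using i by (intro sroot_step) auto
  have "mesh \<theta> N / (2 * sroot \<theta> N N) \<le> delta \<theta> N"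
  proof -
    have "(sroot \<theta> N N)^3 \<le> 2 * sroot \<theta> N N"
    proof -
      have "sroot \<theta> N N * sroot \<theta> N N \<le> 1" using sroot_N_pos sroot_N_le_1 by (simp add: mult_le_one)
      then have "sroot \<theta> N N * sroot \<theta> N N \<le> 2" by simp
      then show ?thesis using sroot_N_pos by (simp add: power3_eq_cube)
    qed
    then show ?thesis unfolding delta_def using mesh_pos sroot_N_pos
      by (intro divide_left_mono) auto
  qed
  then have "rr \<theta> N (i - 1) \<le> rr \<theta> N i + delta \<theta> N" using st i by (simp add: rr_sroot)
  also have "\<dots> \<le> rr \<theta> N i * (1 + delta \<theta> N)"
    using rr_ge_1[of i] i delta_nonneg mult_left_mono[of 1 "rr \<theta> N i" "delta \<theta> N"]
    by (simp add: algebra_simps)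
  finally show "rr \<theta> N (i - 1) \<le> rr \<theta> N i * (1 + delta \<theta> N)" .
qed

lemma coef_sq_upper:
  assumes i: "3 \<le> i" "i \<le> N"
  shows "(a_coef \<theta> N i)\<^sup>2 + (c_coef \<theta> N i)\<^sup>2 \<le> 2 * mesh \<theta> N / (rr \<theta> N i)^3"
proof -
  have r1: "rr \<theta> N i \<ge> 1" using rr_ge_1 i by simp
  have "(c_coef \<theta> N i)\<^sup>2 \<le> (mm \<theta> N i / rr \<theta> N i) * mesh \<theta> N / (rr \<theta> N i)\<^sup>2"
    unfolding c_coef_sq[OF i] using rr_pred(1)[OF i] r1 mm_div_rr_nonneg[of i] i mesh_pos
    by (intro divide_left_mono power_mono mult_nonneg_nonneg mult_pos_pos) auto
  moreover have "mesh \<theta> N / (rr \<theta> N i)\<^sup>2 + (mm \<theta> N i / rr \<theta> N i) * mesh \<theta> N / (rr \<theta> N i)\<^sup>2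
      = 2 * mesh \<theta> N / (rr \<theta> N i)^3"
  proof -
    have "h / r\<^sup>2 + ((2 - r) / r) * h / r\<^sup>2 = 2 * h / r^3" if "r > 0" for r h :: real
      using that by (simp add: power2_eq_square power3_eq_cube field_simps)
    then show ?thesis
      using r1 by (simp add: mm_eq_2_minus_rr)
  qed
  ultimately show ?thesis using a_coef_sq[of i] i by simp
qed

lemma coef_sq_lower:
  assumes i: "3 \<le> i" "i \<le> N"
  shows "(2 * mesh \<theta> N / (rr \<theta> N i)^3) / (1 + delta \<theta> N)\<^sup>2 \<le> (a_coef \<theta> N i)\<^sup>2 + (c_coef \<theta> N i)\<^sup>2"
proof -
  have r1: "rr \<theta> N i \<ge> 1" using rr_ge_1 i by simp
  have d: "1 + delta \<theta> N \<ge> 1" using delta_nonneg by simp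
  have A: "(mm \<theta> N i / rr \<theta> N i) * mesh \<theta> N / (rr \<theta> N i * (1 + delta \<theta> N))\<^sup>2 \<le> (c_coef \<theta> N i)\<^sup>2"
    unfolding c_coef_sq[OF i] using rr_pred[OF i] r1 mm_div_rr_nonneg[of i] i mesh_pos d
    by (intro divide_left_mono power_mono mult_nonneg_nonneg mult_pos_pos) auto
  have "mesh \<theta> N / (rr \<theta> N i * (1 + delta \<theta> N))\<^sup>2 \<le> mesh \<theta> N / (rr \<theta> N i)\<^sup>2"
    using i r1 mesh_pos d mult_left_mono[of 1 "1 + delta \<theta> N" "rr \<theta> N i"]
    by (intro divide_left_mono power_mono mult_pos_pos) auto
  then have B: "mesh \<theta> N / (rr \<theta> N i * (1 + delta \<theta> N))\<^sup>2 \<le> (a_coef \<theta> N i)\<^sup>2"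
    using a_coef_sq[of i] i by simp
  have "(2 * mesh \<theta> N / (rr \<theta> N i)^3) / (1 + delta \<theta> N)\<^sup>2 =
     mesh \<theta> N / (rr \<theta> N i * (1 + delta \<theta> N))\<^sup>2
         + (mm \<theta> N i / rr \<theta> N i) * mesh \<theta> N / (rr \<theta> N i * (1 + delta \<theta> N))\<^sup>2"
  proof -
    have "(2 * h / r^3) / c\<^sup>2 = h / (r * c)\<^sup>2 + ((2 - r) / r) * h / (r * c)\<^sup>2"
      if "r > 0" "c > 0" for r c h :: real
      using that by (simp add: power2_eq_square power3_eq_cube field_simps)
    then show ?thesis
      using r1 d by (simp add: mm_eq_2_minus_rr)
  qed
  then show ?thesis using A B by simp
qed

lemma a_coef_sq_le: "3 \<le> i \<Longrightarrow> i \<le> N \<Longrightarrow> (a_coef \<theta> N i)\<^sup>2 \<le> mesh \<theta> N"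
proof -
  assume i: "3 \<le> i" "i \<le> N"
  have "mesh \<theta> N / (rr \<theta> N i)\<^sup>2 \<le> mesh \<theta> N / 1"
    using rr_ge_1[of i] i mesh_pos by (intro divide_left_mono) (auto simp: one_le_power)
  then show ?thesis using a_coef_sq[of i] i by simp
qed

lemma c_coef_sq_le: "3 \<le> i \<Longrightarrow> i \<le> N \<Longrightarrow> (c_coef \<theta> N i)\<^sup>2 \<le> mesh \<theta> N"
proof -
  assume i: "3 \<le> i" "i \<le> N"
  have "mm \<theta> N i / rr \<theta> N i \<le> 1" using sroot_pos[of i] i by (simp add: rr_sroot mm_sroot)
  then have a: "(mm \<theta> N i / rr \<theta> N i) * mesh \<theta> N \<le> mesh \<theta> N"
    using mesh_pos mult_right_mono[of "mm \<theta> N i / rr \<theta> N i" 1 "mesh \<theta> N"] by simp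
  have b: "(rr \<theta> N (i - 1))\<^sup>2 \<ge> 1" using rr_ge_1[of "i - 1"] i by (simp add: one_le_power)
  have "(mm \<theta> N i / rr \<theta> N i) * mesh \<theta> N / (rr \<theta> N (i - 1))\<^sup>2 \<le> mesh \<theta> N / (rr \<theta> N (i - 1))\<^sup>2"
    using a b by (intro divide_right_mono) auto
  also have "\<dots> \<le> mesh \<theta> N / 1" using b mesh_pos by (intro divide_left_mono) auto
  finally show ?thesis using c_coef_sq[OF i] by simp
qed

lemma weight_var_term_upper:
  assumes i: "3 \<le> i" "i \<le> N" and d: "delta \<theta> N < 1"
  shows "((a_coef \<theta> N i)\<^sup>2 + (c_coef \<theta> N i)\<^sup>2) * (L_weight \<theta> N i N)\<^sup>2
      \<le> mesh \<theta> N * var_density ((real i - 1) * mesh \<theta> N) / (1 - delta \<theta> N)\<^sup>2"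
proof -
  have H: "0 \<le> L_weight \<theta> N i N" "L_weight \<theta> N i N \<le> gam_fixpoint \<theta> N i / (1 - delta \<theta> N)"
    using i d by (auto intro!: L_weight_nonneg L_weight_upper)
  have "((a_coef \<theta> N i)\<^sup>2 + (c_coef \<theta> N i)\<^sup>2) * (L_weight \<theta> N i N)\<^sup>2
      \<le> (2 * mesh \<theta> N / (rr \<theta> N i)^3) * (gam_fixpoint \<theta> N i / (1 - delta \<theta> N))\<^sup>2"
    using coef_sq_upper[OF i] H mesh_pos rr_ge_1[of i] i by (intro mult_mono power_mono) auto
  also have "\<dots> = mesh \<theta> N * var_density ((real i - 1) * mesh \<theta> N) / (1 - delta \<theta> N)\<^sup>2"
    using mesh_var_density_eq[of i] i by (simp add: power_divide)
  finally show ?thesis .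
qed

lemma weight_var_term_lower:
  assumes i: "3 \<le> i" "i \<le> N"
  shows "mesh \<theta> N * var_density ((real i - 1) * mesh \<theta> N) / (1 + delta \<theta> N)\<^sup>2
      - 4 * mesh \<theta> N * gam_fixpoint \<theta> N i * weight_defect \<theta> N i
     \<le> ((a_coef \<theta> N i)\<^sup>2 + (c_coef \<theta> N i)\<^sup>2) * (L_weight \<theta> N i N)\<^sup>2"
proof -
  define P where "P = (a_coef \<theta> N i)\<^sup>2 + (c_coef \<theta> N i)\<^sup>2"
  define f where "f = gam_fixpoint \<theta> N i"
  define E where "E = weight_defect \<theta> N i"
  define H where "H = L_weight \<theta> N i N"
  have E0: "E \<ge> 0" unfolding E_def weight_defect_def using gam_fixpoint_ge_1[of N] N3
    by (intro mult_nonneg_nonneg prod_nonneg) (auto intro!: gam_nonneg)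
  have f0: "f \<ge> 1" using gam_fixpoint_ge_1[of i] i by (simp add: f_def)
  have H0: "H \<ge> 0" using i by (auto simp: H_def intro!: L_weight_nonneg)
  have HL: "f - E \<le> H"
    using L_weight_lower[of i] i by (simp add: f_def E_def H_def weight_defect_def)
  have H2: "f\<^sup>2 - 2 * f * E \<le> H\<^sup>2"
  proof (cases "f - E \<ge> 0")
    case True
    then have "(f - E)\<^sup>2 \<le> H\<^sup>2" using HL by (intro power_mono) auto
    moreover have "f\<^sup>2 - 2 * f * E \<le> (f - E)\<^sup>2" by (simp add: power2_eq_square algebra_simps)
    ultimately show ?thesis by linarith
  next
    case False
    then have "f\<^sup>2 - 2 * f * E \<le> 0" using f0 E0 by (simp add: power2_eq_square algebra_simps)
    then show ?thesis by (smt (verit) zero_le_power2)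
  qed
  have P0: "P \<ge> 0" by (simp add: P_def)
  have Pu: "P \<le> 2 * mesh \<theta> N"
  proof -
    have "P \<le> 2 * mesh \<theta> N / (rr \<theta> N i)^3" using coef_sq_upper[OF i] by (simp add: P_def)
    also have "\<dots> \<le> 2 * mesh \<theta> N / 1"
      using rr_ge_1[of i] i mesh_pos by (intro divide_left_mono) (auto simp: one_le_power)
    finally show ?thesis by simp
  qed
  have Pl: "(2 * mesh \<theta> N / (rr \<theta> N i)^3) / (1 + delta \<theta> N)\<^sup>2 \<le> P"
    using coef_sq_lower[OF i] by (simp add: P_def)
  have T: "mesh \<theta> N * var_density ((real i - 1) * mesh \<theta> N) / (1 + delta \<theta> N)\<^sup>2
      = ((2 * mesh \<theta> N / (rr \<theta> N i)^3) / (1 + delta \<theta> N)\<^sup>2) * f\<^sup>2"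
    using mesh_var_density_eq[of i] i by (simp add: f_def)
  have "((2 * mesh \<theta> N / (rr \<theta> N i)^3) / (1 + delta \<theta> N)\<^sup>2) * f\<^sup>2 \<le> P * f\<^sup>2"
    using Pl by (intro mult_right_mono) auto
  moreover have "P * (2 * f * E) \<le> (2 * mesh \<theta> N) * (2 * f * E)"
    using Pu f0 E0 by (intro mult_right_mono) auto
  moreover have "P * (f\<^sup>2 - 2 * f * E) \<le> P * H\<^sup>2" using H2 P0 by (intro mult_left_mono)
  ultimately have "((2 * mesh \<theta> N / (rr \<theta> N i)^3) / (1 + delta \<theta> N)\<^sup>2) * f\<^sup>2
      - 4 * mesh \<theta> N * f * E \<le> P * H\<^sup>2"
    by (simp add: algebra_simps)
  then show ?thesis unfolding T by (simp add: P_def f_def E_def H_def)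
qed

lemma weight_defect_sum_le:
  "(\<Sum>i=3..N. 4 * mesh \<theta> N * gam_fixpoint \<theta> N i * weight_defect \<theta> N i) \<le> 2 * delta \<theta> N"
proof -
  define c where "c = sroot \<theta> N N"
  have c: "c > 0" "c \<le> 1" using sroot_N_pos sroot_N_le_1 by (auto simp: c_def)
  have fix_N: "0 \<le> gam_fixpoint \<theta> N N - 1" "gam_fixpoint \<theta> N N - 1 \<le> 1 / (2 * c)"
    using gam_fixpoint_ge_1[of N] N3 c by (auto simp: gam_fixpoint_def c_def[symmetric] field_simps)
  have "(\<Sum>i=3..N. 4 * mesh \<theta> N * gam_fixpoint \<theta> N i * weight_defect \<theta> N i)
      \<le> (\<Sum>i=3..N. 4 * mesh \<theta> N * (1 / c * (1 / (2 * c) * gam \<theta> N N ^ (N - i))))"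
  proof (intro sum_mono)
    fix i assume i: "i \<in> {3..N}"
    have "0 \<le> (\<Prod>k=Suc i..N. gam \<theta> N k)" by (intro prod_nonneg) (auto intro!: gam_nonneg)
    then have "0 \<le> weight_defect \<theta> N i"
      and "weight_defect \<theta> N i \<le> 1 / (2 * c) * gam \<theta> N N ^ (N - i)"
      unfolding weight_defect_def using fix_N prod_gam_le[of i] i c
      by (simp, intro mult_mono) auto
    moreover have "0 \<le> gam_fixpoint \<theta> N i" "gam_fixpoint \<theta> N i \<le> 1 / c"
      using gam_fixpoint_ge_1[of i] gam_fixpoint_le[of i] i by (auto simp: c_def)
    ultimately have "gam_fixpoint \<theta> N i * weight_defect \<theta> N i
        \<le> 1 / c * (1 / (2 * c) * gam \<theta> N N ^ (N - i))"
      using c by (intro mult_mono) auto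
    then have "4 * mesh \<theta> N * (gam_fixpoint \<theta> N i * weight_defect \<theta> N i)
        \<le> 4 * mesh \<theta> N * (1 / c * (1 / (2 * c) * gam \<theta> N N ^ (N - i)))"
      using mesh_pos by (intro mult_left_mono) auto
    then show "4 * mesh \<theta> N * gam_fixpoint \<theta> N i * weight_defect \<theta> N i
        \<le> 4 * mesh \<theta> N * (1 / c * (1 / (2 * c) * gam \<theta> N N ^ (N - i)))"
      by (simp only: mult.assoc)
  qed
  also have "\<dots> = 4 * mesh \<theta> N * (1 / c) * (1 / (2 * c)) * (\<Sum>i=3..N. gam \<theta> N N ^ (N - i))"
    by (simp add: sum_distrib_left mult.assoc)
  also have "\<dots> \<le> 4 * mesh \<theta> N * (1 / c) * (1 / (2 * c)) * (1 / c)"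
    using sum_gam_N_powers_le mesh_pos c by (intro mult_left_mono) (auto simp: c_def)
  also have "\<dots> = 2 * delta \<theta> N"
    using c by (simp add: delta_def c_def[symmetric] power3_eq_cube field_simps)
  finally show ?thesis .
qed

lemma mesh_riemann_sum_le:
  "(\<Sum>i=3..N. mesh \<theta> N * var_density ((real i - 1) * mesh \<theta> N)) \<le> limit_var \<theta>"
proof -
  have "(\<Sum>i=3..N. mesh \<theta> N * var_density ((real i - 1) * mesh \<theta> N))
      \<le> var_primitive (real N * mesh \<theta> N) - var_primitive ((real 3 - 1) * mesh \<theta> N)"
    using mesh_pos N3 N_mesh_lt_1 by (intro riemann_sum_var_density_upper) auto
  moreover have "var_primitive 0 \<le> var_primitive ((real 3 - 1) * mesh \<theta> N)"
  proof (rule var_primitive_mono)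
    show "0 \<le> (real 3 - 1) * mesh \<theta> N" using mesh_pos by simp
    have "(real 3 - 1) * mesh \<theta> N \<le> real N * mesh \<theta> N"
      using N3 mesh_pos by (intro mult_right_mono) auto
    then show "(real 3 - 1) * mesh \<theta> N < 1" using N_mesh_lt_1 by linarith
  qed
  moreover have "real N * mesh \<theta> N = 1 / \<theta>\<^sup>2" by (rule N_mesh)
  ultimately show ?thesis by (simp add: limit_var_def var_primitive_0)
qed
lemma mesh_var_density_last_le: "mesh \<theta> N * var_density (1 / \<theta>\<^sup>2) \<le> 1 / (real N * (\<theta>\<^sup>2 - 1))"
proof -
  have t2: "\<theta>\<^sup>2 > 1" using th by (simp add: one_less_power)
  have "1 / \<theta>\<^sup>2 < 1" using t2 by (auto simp: divide_less_eq_1)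
  then have p: "1 - 1 / \<theta>\<^sup>2 > 0" by simp
  have "var_density (1 / \<theta>\<^sup>2) \<le> 1 / (1 - 1 / \<theta>\<^sup>2)"
  proof -
    have "1 \<le> 2 * (1 + sqrt (1 - 1 / \<theta>\<^sup>2))" using p by simp
    then have "1 * (1 - 1 / \<theta>\<^sup>2) \<le> 2 * (1 + sqrt (1 - 1 / \<theta>\<^sup>2)) * (1 - 1 / \<theta>\<^sup>2)"
      using p by (intro mult_right_mono) auto
    moreover have pos: "0 < 2 * (1 + sqrt (1 - 1 / \<theta>\<^sup>2)) * (1 - 1 / \<theta>\<^sup>2)"
      using p by (intro mult_pos_pos) (auto simp: add_pos_nonneg)
    ultimately show ?thesis unfolding var_density_def using p mult_pos_pos[OF pos p]
      by (intro divide_left_mono) auto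
  qed
  then have "mesh \<theta> N * var_density (1 / \<theta>\<^sup>2) \<le> mesh \<theta> N * (1 / (1 - 1 / \<theta>\<^sup>2))"
    using mesh_pos by (intro mult_left_mono) auto
  also have "\<dots> = 1 / (real N * (\<theta>\<^sup>2 - 1))"
    using t2 N3 th by (simp add: mesh_def field_simps)
  finally show ?thesis .
qed

lemma mesh_riemann_sum_ge: "limit_var \<theta> - 2 - 1 / (real N * (\<theta>\<^sup>2 - 1))
  \<le> (\<Sum>i=3..N. mesh \<theta> N * var_density ((real i - 1) * mesh \<theta> N))"
proof -
  have A: "var_primitive ((real N - 1) * mesh \<theta> N) - var_primitive ((real 3 - 2) * mesh \<theta> N)
      \<le> (\<Sum>i=3..N. mesh \<theta> N * var_density ((real i - 1) * mesh \<theta> N))"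
    using mesh_pos N3 N_mesh_lt_1 by (intro riemann_sum_var_density_lower) auto
  have B: "var_primitive (real N * mesh \<theta> N) - var_primitive ((real N - 1) * mesh \<theta> N)
      \<le> (real N * mesh \<theta> N - (real N - 1) * mesh \<theta> N) * var_density (real N * mesh \<theta> N)"
    using mesh_pos N_mesh_lt_1 by (intro var_primitive_increment(2)) (auto simp: algebra_simps)
  have C: "var_primitive ((real 3 - 2) * mesh \<theta> N) \<le> 2"
  proof -
    have t1: "\<theta>\<^sup>2 \<ge> 1" using th by (simp add: one_le_power)
    have "real N * 1 \<le> real N * \<theta>\<^sup>2" using t1 by (intro mult_left_mono) auto
    moreover have "real N \<ge> 3" using N3 by simp
    ultimately have "2 \<le> real N * \<theta>\<^sup>2" by linarith
    then have "mesh \<theta> N \<le> 1/2" unfolding mesh_def by (intro frac_le) auto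
    then have "var_primitive (mesh \<theta> N) \<le> var_primitive (1/2)" by (intro var_primitive_mono) auto
    then show ?thesis using var_primitive_half_le by simp
  qed
  have e: "real N * mesh \<theta> N - (real N - 1) * mesh \<theta> N = mesh \<theta> N" by (simp add: algebra_simps)
  have B2: "var_primitive (1 / \<theta>\<^sup>2) - var_primitive ((real N - 1) * mesh \<theta> N)
      \<le> mesh \<theta> N * var_density (1 / \<theta>\<^sup>2)"
  proof -
    have e': "1 / \<theta>\<^sup>2 - (real N - 1) * mesh \<theta> N = mesh \<theta> N" using e N_mesh by simp
    show ?thesis using B unfolding N_mesh e' .
  qed
  then have B': "var_primitive (1 / \<theta>\<^sup>2) - var_primitive ((real N - 1) * mesh \<theta> N)
      \<le> 1 / (real N * (\<theta>\<^sup>2 - 1))"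
    using mesh_var_density_last_le by linarith
  have A': "var_primitive ((real N - 1) * mesh \<theta> N) - var_primitive (mesh \<theta> N)
      \<le> (\<Sum>i=3..N. mesh \<theta> N * var_density ((real i - 1) * mesh \<theta> N))"
    using A by simp
  have C': "var_primitive (mesh \<theta> N) \<le> 2" using C by simp
  have "limit_var \<theta> \<le> var_primitive (1 / \<theta>\<^sup>2)" by (simp add: limit_var_def)
  then show ?thesis using A' B' C' by linarith
qed

lemma weight_var_upper: "delta \<theta> N < 1 \<Longrightarrow> weight_var \<theta> N \<le> limit_var \<theta> / (1 - delta \<theta> N)\<^sup>2"
proof -
  assume d: "delta \<theta> N < 1"
  have "weight_var \<theta> N \<le> (\<Sum>i=3..N. mesh \<theta> N * var_density ((real i - 1) * mesh \<theta> N)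
      / (1 - delta \<theta> N)\<^sup>2)"
    unfolding weight_var_def using d by (intro sum_mono weight_var_term_upper) auto
  also have "\<dots> = (\<Sum>i=3..N. mesh \<theta> N * var_density ((real i - 1) * mesh \<theta> N)) / (1 - delta \<theta> N)\<^sup>2"
    by (simp add: sum_divide_distrib)
  also have "\<dots> \<le> limit_var \<theta> / (1 - delta \<theta> N)\<^sup>2"
    using mesh_riemann_sum_le by (intro divide_right_mono) auto
  finally show ?thesis .
qed

lemma weight_var_lower: "(limit_var \<theta> - 2 - 1 / (real N * (\<theta>\<^sup>2 - 1))) / (1 + delta \<theta> N)\<^sup>2
  - 2 * delta \<theta> N \<le> weight_var \<theta> N"
proof -
  have "(limit_var \<theta> - 2 - 1 / (real N * (\<theta>\<^sup>2 - 1))) / (1 + delta \<theta> N)\<^sup>2 - 2 * delta \<theta> N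
     \<le> (\<Sum>i=3..N. mesh \<theta> N * var_density ((real i - 1) * mesh \<theta> N)) / (1 + delta \<theta> N)\<^sup>2
         - (\<Sum>i=3..N. 4 * mesh \<theta> N * gam_fixpoint \<theta> N i * weight_defect \<theta> N i)"
    using mesh_riemann_sum_ge weight_defect_sum_le by (intro diff_mono divide_right_mono) auto
  also have "\<dots> = (\<Sum>i=3..N. mesh \<theta> N * var_density ((real i - 1) * mesh \<theta> N) / (1 + delta \<theta> N)\<^sup>2
      - 4 * mesh \<theta> N * gam_fixpoint \<theta> N i * weight_defect \<theta> N i)"
    by (simp add: sum_divide_distrib sum_subtractf)
  also have "\<dots> \<le> weight_var \<theta> N"
    unfolding weight_var_def by (intro sum_mono weight_var_term_lower) auto
  finally show ?thesis .
qed

lemma delta_le: "delta \<theta> N \<le> \<theta> / (real N * (\<theta>\<^sup>2 - 1) * sqrt (\<theta>\<^sup>2 - 1))"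
proof -
  have t2: "\<theta>\<^sup>2 > 1" using th by (simp add: one_less_power)
  define u where "u = sqrt (\<theta>\<^sup>2 - 1) / \<theta>"
  have u: "u > 0" using t2 th by (simp add: u_def)
  have "u\<^sup>2 = 1 - real N * mesh \<theta> N"
    using th t2 by (simp add: u_def N_mesh power_divide field_simps)
  also have "\<dots> \<le> 1 - (real N - 1) * mesh \<theta> N" using mesh_pos by (simp add: algebra_simps)
  also have "\<dots> = (sroot \<theta> N N)\<^sup>2" using sroot_sq[of N] by simp
  finally have "u \<le> sroot \<theta> N N" using sroot_N_pos u by (simp add: power2_le_iff_abs_le abs_of_pos)
  then have "u^3 \<le> (sroot \<theta> N N)^3" using u by (intro power_mono) auto
  then have "delta \<theta> N \<le> mesh \<theta> N / u^3" unfolding delta_def using mesh_pos u sroot_N_pos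
    by (intro divide_left_mono) auto
  also have "\<dots> = \<theta> / (real N * (\<theta>\<^sup>2 - 1) * sqrt (\<theta>\<^sup>2 - 1))"
  proof -
    define q where "q = sqrt (\<theta>\<^sup>2 - 1)"
    have q: "q > 0" "q * q = \<theta>\<^sup>2 - 1" using t2 by (auto simp: q_def)
    have "u^3 = q * q * q / \<theta>^3"
      by (simp add: u_def q_def[symmetric] power_divide power3_eq_cube)
    then have u3: "u^3 = (\<theta>\<^sup>2 - 1) * q / \<theta>^3" using q by simp
    have Np: "real N > 0" using N3 by simp
    have tp: "\<theta> > 0" "\<theta>\<^sup>2 - 1 > 0" using th t2 by auto
    have "mesh \<theta> N / u^3 = \<theta> / (real N * (\<theta>\<^sup>2 - 1) * q)"
      unfolding u3 mesh_def using Np tp q by (simp add: field_simps power2_eq_square power3_eq_cube)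
    then show ?thesis by (simp add: q_def)
  qed
  finally show ?thesis .
qed

lemma coef_L_weight_sq_le:
  assumes i: "3 \<le> i" "i \<le> N" and d: "delta \<theta> N \<le> 1/2"
  shows "(a_coef \<theta> N i)\<^sup>2 * (L_weight \<theta> N i N)\<^sup>2
      \<le> 4 * delta \<theta> N" "(c_coef \<theta> N i)\<^sup>2 * (L_weight \<theta> N i N)\<^sup>2 \<le> 4 * delta \<theta> N"
proof -
  define c where "c = sroot \<theta> N N"
  have c: "c > 0" "c \<le> 1" using sroot_N_pos sroot_N_le_1 by (auto simp: c_def)
  have H: "0 \<le> L_weight \<theta> N i N" "L_weight \<theta> N i N \<le> gam_fixpoint \<theta> N i / (1 - delta \<theta> N)"
    using i d by (auto intro!: L_weight_nonneg L_weight_upper)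
  have "gam_fixpoint \<theta> N i / (1 - delta \<theta> N) \<le> (1 / c) / (1/2)"
    using gam_fixpoint_le[of i] i d gam_fixpoint_ge_1[of i] c by (intro frac_le) (auto simp: c_def)
  then have "L_weight \<theta> N i N \<le> 2 / c" using H by simp
  then have H2: "(L_weight \<theta> N i N)\<^sup>2 \<le> (2 / c)\<^sup>2" using H by (intro power_mono) auto
  have key: "mesh \<theta> N * (2 / c)\<^sup>2 \<le> 4 * delta \<theta> N"
  proof -
    have "c^3 \<le> c\<^sup>2" using c by (simp add: power3_eq_cube power2_eq_square mult_le_cancel_left1
        mult_le_one)
    then have "mesh \<theta> N / c\<^sup>2 \<le> mesh \<theta> N / c^3" using mesh_pos c by (intro divide_left_mono) auto
    then have "4 * (mesh \<theta> N / c\<^sup>2) \<le> 4 * (mesh \<theta> N / c^3)" by simp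
    moreover have "mesh \<theta> N * (2 / c)\<^sup>2 = 4 * (mesh \<theta> N / c\<^sup>2)" by (simp add: power_divide)
    ultimately show ?thesis by (simp add: delta_def c_def[symmetric])
  qed
  show "(a_coef \<theta> N i)\<^sup>2 * (L_weight \<theta> N i N)\<^sup>2 \<le> 4 * delta \<theta> N"
    using mult_mono[OF a_coef_sq_le[OF i] H2] mesh_pos key by simp
  show "(c_coef \<theta> N i)\<^sup>2 * (L_weight \<theta> N i N)\<^sup>2 \<le> 4 * delta \<theta> N"
    using mult_mono[OF c_coef_sq_le[OF i] H2] mesh_pos key by simp
qed


end

section \<open>The sum of the L_i as a weighted sum of the entries\<close>

lemma LL_eq_sum:
  "LL \<theta> N a b n \<omega> = (\<Sum>i=3..n. xi \<theta> N a b i \<omega> * (\<Prod>k=Suc i..n. gam \<theta> N k))"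
proof (induction n)
  case (Suc n)
  show ?case
  proof (cases "Suc n \<le> 2")
    case False
    have "(\<Sum>i=3..n. xi \<theta> N a b i \<omega> * (\<Prod>k=Suc i..Suc n. gam \<theta> N k))
      = gam \<theta> N (Suc n) * (\<Sum>i=3..n. xi \<theta> N a b i \<omega> * (\<Prod>k=Suc i..n. gam \<theta> N k))"
      by (simp add: sum_distrib_left mult_ac)
    then show ?thesis
      using False Suc.IH by simp
  qed simp
qed simp

lemma sum_LL_eq_sum_L_weight:
  "(\<Sum>n=3..m. LL \<theta> N a b n \<omega>) = (\<Sum>i=3..m. L_weight \<theta> N i m * xi \<theta> N a b i \<omega>)"
proof (induction m)
  case (Suc m)
  show ?case
  proof (cases "Suc m \<le> 2")
    case False
    have "L_weight \<theta> N i (Suc m) = L_weight \<theta> N i m + (\<Prod>k=Suc i..Suc m. gam \<theta> N k)"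
      if "i \<le> m" for i
      unfolding L_weight_def using that by (subst sum.cl_ivl_Suc) auto
    then have "(\<Sum>i=3..m. L_weight \<theta> N i (Suc m) * xi \<theta> N a b i \<omega>)
      = (\<Sum>i=3..m. L_weight \<theta> N i m * xi \<theta> N a b i \<omega>)
        + (\<Sum>i=3..m. xi \<theta> N a b i \<omega> * (\<Prod>k=Suc i..Suc m. gam \<theta> N k))"
      by (simp add: sum.distrib algebra_simps)
    then show ?thesis
      using False Suc.IH LL_eq_sum[of \<theta> N a b "Suc m" \<omega>]
      by (simp add: L_weight_self)
  qed simp
qed simp

definition summand_index :: "nat \<Rightarrow> (nat + nat) set" where
  "summand_index N = {3..N} <+> {2..N - 1}"

(* The summand Inl i is a_i; the summand Inr j is c_j, which enters through xi_(j+1). *)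
definition summand_coef :: "real \<Rightarrow> nat \<Rightarrow> nat + nat \<Rightarrow> real" where
  "summand_coef \<theta> N = case_sum (\<lambda>i. a_coef \<theta> N i * L_weight \<theta> N i N)
     (\<lambda>j. c_coef \<theta> N (Suc j) * L_weight \<theta> N (Suc j) N)"

lemma sum_summand_index:
  "(\<Sum>k\<in>summand_index N. f k) = (\<Sum>i=3..N. f (Inl i) + f (Inr (i - 1)))"
proof -
  have "(\<Sum>j=2..N-1. f (Inr j)) = (\<Sum>i=3..N. f (Inr (i - 1)))"
  proof (cases "N \<ge> 3")
    case True
    then have "(\<Sum>i=3..N. f (Inr (i - 1))) = (\<Sum>i=2+1..(N-1)+1. f (Inr (i - 1)))" by simp
    also have "\<dots> = (\<Sum>j=2..N-1. f (Inr j))" by (subst sum.shift_bounds_cl_nat_ivl) simp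
    finally show ?thesis ..
  qed simp
  then show ?thesis
    by (simp add: summand_index_def sum.Plus sum.distrib)
qed

lemma sum_LL_eq_summands:
  "(\<Sum>i=3..N. LL \<theta> N a b i \<omega>)
    = (\<Sum>k\<in>summand_index N. summand_coef \<theta> N k * case_sum a (cc b) k \<omega>)"
proof -
  have "summand_coef \<theta> N (Inl i) * a i \<omega> + summand_coef \<theta> N (Inr (i - 1)) * cc b (i - 1) \<omega>
      = L_weight \<theta> N i N * xi \<theta> N a b i \<omega>" if "i \<in> {3..N}" for i
    using that by (simp add: summand_coef_def xi_def a_coef_def c_coef_def algebra_simps)
  then show ?thesis
    by (simp add: sum_summand_index sum_LL_eq_sum_L_weight)
qed

lemma sum_summand_coef_sq: "(\<Sum>k\<in>summand_index N. (summand_coef \<theta> N k)\<^sup>2) = weight_var \<theta> N"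
  by (auto simp: sum_summand_index weight_var_def summand_coef_def power_mult_distrib
      algebra_simps intro!: sum.cong)

lemma (in grid) abs_summand_coef_div_le:
  assumes "delta \<theta> N \<le> 1/2" and "1 \<le> c" and "k \<in> summand_index N"
  shows "\<bar>summand_coef \<theta> N k / c\<bar> \<le> sqrt (4 * delta \<theta> N)"
proof -
  have "(summand_coef \<theta> N k)\<^sup>2 \<le> 4 * delta \<theta> N"
    using assms coef_L_weight_sq_le
    by (auto simp: summand_index_def summand_coef_def power_mult_distrib)
  then have "\<bar>summand_coef \<theta> N k\<bar> \<le> sqrt (4 * delta \<theta> N)"
    by (simp add: real_le_rsqrt)
  also have "\<dots> \<le> sqrt (4 * delta \<theta> N) * c"
    using mult_left_mono[OF \<open>1 \<le> c\<close>, of "sqrt (4 * delta \<theta> N)"] delta_nonneg by simp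
  finally show ?thesis
    using \<open>1 \<le> c\<close> by (simp add: abs_div divide_le_eq)
qed

section \<open>Asymptotics\<close>

lemma limit_var_at_top: "filterlim limit_var at_top (at_right 1)"
proof -
  have "filterlim (\<lambda>\<theta>::real. ln ((\<theta> + sqrt (\<theta>\<^sup>2 - 1)) / (2 * sqrt (\<theta>\<^sup>2 - 1)))) at_top (at_right 1)"
    by real_asymp
  moreover have "eventually (\<lambda>\<theta>. ln ((\<theta> + sqrt (\<theta>\<^sup>2 - 1)) / (2 * sqrt (\<theta>\<^sup>2 - 1))) = limit_var \<theta>)
      (at_right 1)"
    using eventually_at_right_less[of 1] by eventually_elim (simp add: limit_var_eq)
  ultimately show ?thesis
    by (simp add: filterlim_cong)
qed

lemma (in grid) weight_var_div_limit_var_le: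
  assumes "delta \<theta> N < 1" and "limit_var \<theta> > 0"
  shows "weight_var \<theta> N / limit_var \<theta> \<le> 1 / (1 - delta \<theta> N)\<^sup>2"
proof -
  have "weight_var \<theta> N / limit_var \<theta> \<le> (limit_var \<theta> / (1 - delta \<theta> N)\<^sup>2) / limit_var \<theta>"
    using weight_var_upper assms by (intro divide_right_mono) auto
  then show ?thesis
    using assms(2) by simp
qed

lemma (in grid) weight_var_div_limit_var_ge:
  assumes "limit_var \<theta> > 0"
  shows "(1 - (2 + 1 / (real N * (\<theta>\<^sup>2 - 1))) / limit_var \<theta>) / (1 + delta \<theta> N)\<^sup>2
      - 2 * delta \<theta> N / limit_var \<theta> \<le> weight_var \<theta> N / limit_var \<theta>"
proof -
  define e where "e = 1 / (real N * (\<theta>\<^sup>2 - 1))"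
  have "((limit_var \<theta> - 2 - e) / (1 + delta \<theta> N)\<^sup>2 - 2 * delta \<theta> N) / limit_var \<theta>
      \<le> weight_var \<theta> N / limit_var \<theta>"
    using weight_var_lower assms by (intro divide_right_mono) (auto simp: e_def)
  moreover have "((limit_var \<theta> - 2 - e) / (1 + delta \<theta> N)\<^sup>2 - 2 * delta \<theta> N) / limit_var \<theta>
      = (1 - (2 + e) / limit_var \<theta>) / (1 + delta \<theta> N)\<^sup>2 - 2 * delta \<theta> N / limit_var \<theta>"
    using assms delta_nonneg by (simp add: field_simps)
  ultimately show ?thesis
    by (simp add: e_def)
qed

context
  fixes \<theta> :: "nat \<Rightarrow> real"
  assumes gt1: "eventually (\<lambda>N. \<theta> N > 1) sequentially" and lim: "\<theta> \<longlonglongrightarrow> 1"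
    and growth: "filterlim (\<lambda>N. real N * ((\<theta> N)\<^sup>2 - 1) * sqrt ((\<theta> N)\<^sup>2 - 1)) at_top sequentially"
begin

lemma eventually_grid: "eventually (\<lambda>N. grid (\<theta> N) N) sequentially"
  using gt1 eventually_ge_at_top[of 3] by eventually_elim (simp add: grid_def)

lemma limit_var_theta_at_top: "filterlim (\<lambda>N. limit_var (\<theta> N)) at_top sequentially"
  using limit_var_at_top tendsto_imp_filterlim_at_right[OF lim gt1] by (rule filterlim_compose)

lemma delta_theta_tendsto_0: "(\<lambda>N. delta (\<theta> N) N) \<longlonglongrightarrow> 0"
proof (rule tendsto_sandwich[where f="\<lambda>_. 0"
      and h="\<lambda>N. \<theta> N * inverse (real N * ((\<theta> N)\<^sup>2 - 1) * sqrt ((\<theta> N)\<^sup>2 - 1))"])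
  show "eventually (\<lambda>N. 0 \<le> delta (\<theta> N) N) sequentially"
    using eventually_grid by eventually_elim (rule grid.delta_nonneg)
  show "eventually (\<lambda>N. delta (\<theta> N) N
      \<le> \<theta> N * inverse (real N * ((\<theta> N)\<^sup>2 - 1) * sqrt ((\<theta> N)\<^sup>2 - 1))) sequentially"
    using eventually_grid by eventually_elim (simp only: grid.delta_le flip: divide_inverse)
  show "(\<lambda>N. \<theta> N * inverse (real N * ((\<theta> N)\<^sup>2 - 1) * sqrt ((\<theta> N)\<^sup>2 - 1))) \<longlonglongrightarrow> 0"
    using tendsto_mult[OF lim tendsto_inverse_0_at_top[OF growth]] by simp
qed simp

lemma N_theta_sq_sub_1_at_top: "filterlim (\<lambda>N. real N * ((\<theta> N)\<^sup>2 - 1)) at_top sequentially"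
proof (rule filterlim_at_top_mono[OF growth])
  have "(\<lambda>N. sqrt ((\<theta> N)\<^sup>2 - 1)) \<longlonglongrightarrow> sqrt (1\<^sup>2 - 1)"
    by (intro tendsto_intros lim)
  then have "eventually (\<lambda>N. sqrt ((\<theta> N)\<^sup>2 - 1) < 1) sequentially"
    by (intro order_tendstoD) auto
  then show "eventually (\<lambda>N. real N * ((\<theta> N)\<^sup>2 - 1) * sqrt ((\<theta> N)\<^sup>2 - 1)
      \<le> real N * ((\<theta> N)\<^sup>2 - 1)) sequentially"
    using gt1 by eventually_elim (simp add: mult_left_le one_less_power less_imp_le)
qed

lemma weight_var_div_limit_var_tendsto_1:
  "(\<lambda>N. weight_var (\<theta> N) N / limit_var (\<theta> N)) \<longlonglongrightarrow> 1"
proof (rule tendsto_sandwich[where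
      f="\<lambda>N. (1 - (2 + 1 / (real N * ((\<theta> N)\<^sup>2 - 1))) / limit_var (\<theta> N)) / (1 + delta (\<theta> N) N)\<^sup>2
        - 2 * delta (\<theta> N) N / limit_var (\<theta> N)"
      and h="\<lambda>N. 1 / (1 - delta (\<theta> N) N)\<^sup>2"])
  have pos: "eventually (\<lambda>N. limit_var (\<theta> N) > 0) sequentially"
    using limit_var_theta_at_top by (simp add: filterlim_at_top_dense)
  show "eventually (\<lambda>N. (1 - (2 + 1 / (real N * ((\<theta> N)\<^sup>2 - 1))) / limit_var (\<theta> N))
      / (1 + delta (\<theta> N) N)\<^sup>2 - 2 * delta (\<theta> N) N / limit_var (\<theta> N)
      \<le> weight_var (\<theta> N) N / limit_var (\<theta> N)) sequentially"
    using eventually_grid pos by eventually_elim (rule grid.weight_var_div_limit_var_ge)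
  show "eventually (\<lambda>N. weight_var (\<theta> N) N / limit_var (\<theta> N) \<le> 1 / (1 - delta (\<theta> N) N)\<^sup>2)
      sequentially"
    using eventually_grid pos order_tendstoD(2)[OF delta_theta_tendsto_0 zero_less_one]
    by eventually_elim (rule grid.weight_var_div_limit_var_le)
  have "(\<lambda>N. (1 - (2 + 1 / (real N * ((\<theta> N)\<^sup>2 - 1))) / limit_var (\<theta> N)) / (1 + delta (\<theta> N) N)\<^sup>2
      - 2 * delta (\<theta> N) N / limit_var (\<theta> N)) \<longlonglongrightarrow> (1 - (2 + 0) * 0) / (1 + 0)\<^sup>2 - 2 * 0 * 0"
    using tendsto_inverse_0_at_top[OF N_theta_sq_sub_1_at_top]
      tendsto_inverse_0_at_top[OF limit_var_theta_at_top]
    unfolding divide_inverse[of "2 * _"] divide_inverse[of "1 - _"] divide_inverse[of "2 + _"]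
      inverse_eq_divide[symmetric]
    by (intro tendsto_intros delta_theta_tendsto_0) auto
  then show "(\<lambda>N. (1 - (2 + 1 / (real N * ((\<theta> N)\<^sup>2 - 1))) / limit_var (\<theta> N))
      / (1 + delta (\<theta> N) N)\<^sup>2 - 2 * delta (\<theta> N) N / limit_var (\<theta> N)) \<longlonglongrightarrow> 1"
    by simp
  have "(\<lambda>N. 1 / (1 - delta (\<theta> N) N)\<^sup>2) \<longlonglongrightarrow> 1 / (1 - 0)\<^sup>2"
    by (intro tendsto_intros delta_theta_tendsto_0) auto
  then show "(\<lambda>N. 1 / (1 - delta (\<theta> N) N)\<^sup>2) \<longlonglongrightarrow> 1"
    by simp
qed

end

lemma (in prob_space) summand_sum_weak_conv_std_normal:
  fixes Y :: "nat + nat \<Rightarrow> 'a \<Rightarrow> real" and \<theta> :: "nat \<Rightarrow> real"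
  assumes \<alpha>: "\<alpha> > 0"
    and indep: "indep_vars (\<lambda>_. borel) Y (Inl ` {1..} \<union> Inr ` {1..})"
    and mean: "\<And>k. k \<in> Inl ` {1..} \<union> Inr ` {1..} \<Longrightarrow> has_bochner_integral M (Y k) 0"
    and var: "\<And>k. k \<in> Inl ` {1..} \<union> Inr ` {1..} \<Longrightarrow> has_bochner_integral M (\<lambda>\<omega>. (Y k \<omega>)^2) \<alpha>"
    and int4: "\<And>k. k \<in> Inl ` {1..} \<union> Inr ` {1..} \<Longrightarrow> integrable M (\<lambda>\<omega>. (Y k \<omega>)^4)"
    and fourth: "\<And>k. k \<in> Inl ` {1..} \<union> Inr ` {1..} \<Longrightarrow> expectation (\<lambda>\<omega>. (Y k \<omega>)^4) \<le> K"
    and gt1: "eventually (\<lambda>N. \<theta> N > 1) sequentially" and lim: "\<theta> \<longlonglongrightarrow> 1"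
    and growth: "filterlim (\<lambda>N. real N * ((\<theta> N)\<^sup>2 - 1) * sqrt ((\<theta> N)\<^sup>2 - 1)) at_top sequentially"
  shows "weak_conv_m (\<lambda>N. distr M borel (\<lambda>\<omega>. \<Sum>k\<in>summand_index N.
      summand_coef (\<theta> N) N k / sqrt (\<alpha> * limit_var (\<theta> N)) * Y k \<omega>)) std_normal_distribution"
proof -
  note limits = limit_var_theta_at_top[OF gt1 lim growth] delta_theta_tendsto_0[OF gt1 lim growth]
    weight_var_div_limit_var_tendsto_1[OF gt1 lim growth]
  have large: "eventually (\<lambda>N. grid (\<theta> N) N \<and> delta (\<theta> N) N \<le> 1/2 \<and> 1 \<le> \<alpha> * limit_var (\<theta> N))
      sequentially"
    using gt1 eventually_ge_at_top[of 3] order_tendstoD(2)[OF limits(2), of "1/2", simplified]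
      limits(1)[unfolded filterlim_at_top, rule_format, of "1 / \<alpha>"]
    by eventually_elim (use \<alpha> in \<open>simp add: grid_def divide_le_eq mult.commute\<close>)
  show ?thesis
  proof (rule weighted_sum_weak_conv_std_normal[OF indep _ _ \<alpha> mean var int4 fourth])
    show "(\<lambda>N. \<alpha> * (\<Sum>k\<in>summand_index N. (summand_coef (\<theta> N) N k / sqrt (\<alpha> * limit_var (\<theta> N)))\<^sup>2))
        \<longlonglongrightarrow> 1"
      using limits(3)
    proof (rule Lim_transform_eventually)
      show "eventually (\<lambda>N. weight_var (\<theta> N) N / limit_var (\<theta> N)
          = \<alpha> * (\<Sum>k\<in>summand_index N. (summand_coef (\<theta> N) N k / sqrt (\<alpha> * limit_var (\<theta> N)))\<^sup>2))
          sequentially"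
        using large by eventually_elim
          (use \<alpha> in \<open>simp add: power_divide sum_divide_distrib[symmetric] sum_summand_coef_sq\<close>)
    qed
    show "eventually (\<lambda>N. \<forall>k\<in>summand_index N.
        \<bar>summand_coef (\<theta> N) N k / sqrt (\<alpha> * limit_var (\<theta> N))\<bar> \<le> sqrt (4 * delta (\<theta> N) N))
            sequentially"
      using large
    proof eventually_elim
      case (elim N)
      then have "1 \<le> sqrt (\<alpha> * limit_var (\<theta> N))" by simp
      with elim show ?case by (intro ballI grid.abs_summand_coef_div_le) auto
    qed
    show "(\<lambda>N. sqrt (4 * delta (\<theta> N) N)) \<longlonglongrightarrow> 0"
      using tendsto_real_sqrt[OF tendsto_mult[OF tendsto_const[of 4] limits(2)]] by simp
  qed (auto simp: summand_index_def)
qed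

lemma filterlim_at_top_if_dominates:
  fixes f g :: "'a \<Rightarrow> real"
  assumes f: "filterlim f at_top F" and ratio: "((\<lambda>x. f x / g x) \<longlongrightarrow> 0) F"
    and g_pos: "eventually (\<lambda>x. g x > 0) F"
  shows "filterlim g at_top F"
proof (subst filterlim_at_top, intro allI)
  fix Z :: real
  define Z' where "Z' = max Z 1"
  have Z': "Z' > 0" "Z \<le> Z'" by (auto simp: Z'_def)
  have "eventually (\<lambda>x. f x \<ge> 1) F"
    using f by (simp add: filterlim_at_top)
  moreover have "eventually (\<lambda>x. f x / g x < 1 / Z') F"
    using order_tendstoD(2)[OF ratio] Z' by simp
  ultimately show "eventually (\<lambda>x. Z \<le> g x) F"
    using g_pos
  proof eventually_elim
    case (elim x)
    then have "f x * Z' < g x" using Z' by (simp add: field_simps)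
    moreover have "Z' \<le> f x * Z'" using elim Z' by (simp add: mult_le_cancel_right1)
    ultimately show ?case using Z' by linarith
  qed
qed

lemma powr_mult_tendsto_0_if_ln_sq_dominates:
  fixes w :: "nat \<Rightarrow> real"
  assumes "(\<lambda>N. w N / (ln (real N))\<^sup>2) \<longlonglongrightarrow> 0"
  shows "(\<lambda>N. real N powr (-2/3) * w N) \<longlonglongrightarrow> 0"
proof -
  have "(\<lambda>N::nat. (ln (real N))\<^sup>2 * real N powr (-2/3)) \<longlonglongrightarrow> 0"
    by real_asymp
  then have "(\<lambda>N. (w N / (ln (real N))\<^sup>2) * ((ln (real N))\<^sup>2 * real N powr (-2/3)))
      \<longlonglongrightarrow> 0 * 0"
    by (intro tendsto_mult assms)
  moreover have "eventually (\<lambda>N. (w N / (ln (real N))\<^sup>2) * ((ln (real N))\<^sup>2 * real N powr (-2/3))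
      = real N powr (-2/3) * w N) sequentially"
    using eventually_ge_at_top[of "2::nat"] by eventually_elim (simp add: field_simps)
  ultimately show ?thesis
    by (simp add: Lim_transform_eventually)
qed

lemma thetaN_growth:
  fixes w :: "nat \<Rightarrow> real"
  assumes w: "w N > 0" and N: "N \<ge> 1"
  shows "w N * sqrt (w N) \<le> real N * ((thetaN w N)\<^sup>2 - 1) * sqrt ((thetaN w N)\<^sup>2 - 1)"
proof -
  define x where "x = real N powr (-2/3) * w N"
  have x: "x > 0" using w N by (simp add: x_def)
  have "thetaN w N = 1 + x" by (simp add: thetaN_def x_def)
  then have x_le: "x \<le> (thetaN w N)\<^sup>2 - 1"
    using x by (simp add: power2_eq_square algebra_simps)
  have "real N powr (-2/3) * real N powr (-1/3) = real N powr (-2/3 + -1/3)"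
    by (rule powr_add[symmetric])
  also have "\<dots> = inverse (real N)"
    using N by (simp add: powr_minus)
  finally have "real N * real N powr (-2/3) * real N powr (-1/3) = 1"
    using N by (simp add: mult.assoc)
  moreover have "sqrt x = real N powr (-1/3) * sqrt (w N)"
    using N by (simp add: x_def real_sqrt_mult powr_half_sqrt[symmetric] powr_powr)
  ultimately have "w N * sqrt (w N) = real N * x * sqrt x"
    by (simp add: x_def mult_ac)
  also have "\<dots> \<le> real N * ((thetaN w N)\<^sup>2 - 1) * sqrt ((thetaN w N)\<^sup>2 - 1)"
    using x x_le by (intro mult_mono) auto
  finally show ?thesis .
qed

lemma thetaN_gt_1: "w N > 0 \<Longrightarrow> N > 0 \<Longrightarrow> thetaN w N > 1"
  by (simp add: thetaN_def)

lemma thetaN_asymptotics: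
  fixes w :: "nat \<Rightarrow> real"
  assumes w_pos: "\<And>N. w N > 0" and w_top: "filterlim w at_top sequentially"
    and w_small: "(\<lambda>N. real N powr (-2/3) * w N) \<longlonglongrightarrow> 0"
  shows "eventually (\<lambda>N. thetaN w N > 1) sequentially"
    and "thetaN w \<longlonglongrightarrow> 1"
    and "filterlim (\<lambda>N. real N * ((thetaN w N)\<^sup>2 - 1) * sqrt ((thetaN w N)\<^sup>2 - 1)) at_top
        sequentially"
proof -
  show "eventually (\<lambda>N. thetaN w N > 1) sequentially"
    using eventually_gt_at_top[of 0] by eventually_elim (simp add: thetaN_gt_1 w_pos)
  show "thetaN w \<longlonglongrightarrow> 1"
    using tendsto_add[OF tendsto_const[of 1] w_small] by (simp add: thetaN_def[abs_def])
  have "filterlim (\<lambda>x::real. x * sqrt x) at_top at_top"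
    by real_asymp
  then have "filterlim (\<lambda>N. w N * sqrt (w N)) at_top sequentially"
    using w_top by (rule filterlim_compose)
  then show "filterlim (\<lambda>N. real N * ((thetaN w N)\<^sup>2 - 1) * sqrt ((thetaN w N)\<^sup>2 - 1)) at_top
      sequentially"
    by (rule filterlim_at_top_mono)
      (use eventually_ge_at_top[of 1] in \<open>eventually_elim, simp add: thetaN_growth w_pos\<close>)
qed

theorem theorem5:
  fixes M :: "'a measure" and \<alpha> :: real
    and a b :: "nat \<Rightarrow> 'a \<Rightarrow> real" and w :: "nat \<Rightarrow> real"
  assumes "prob_space M"
    and "\<alpha> > 0"
    and "prob_space.indep_vars M (\<lambda>_. borel) (case_sum a b) (Inl ` {1..} \<union> Inr ` {1..})"
    and "\<And>i. i \<ge> 1 \<Longrightarrow> distributed M lborel (a i) (\<lambda>x. ennreal (normal_density 0 (sqrt \<alpha>) x))"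
    and "\<And>i. i \<ge> 1 \<Longrightarrow> b i \<in> borel_measurable M"
    and "\<And>i. i \<ge> 1 \<Longrightarrow> AE \<omega> in M. b i \<omega> \<ge> 0"
    and "\<And>i. i \<ge> 1 \<Longrightarrow> distr M borel (\<lambda>\<omega>. (b i \<omega>)\<^sup>2)
            = distr (chi2_distribution (2 * real i / \<alpha>)) borel (\<lambda>x. \<alpha> / 2 * x)"
    and "\<And>N. w N > 0"
    and "((\<lambda>N. (ln (ln (real N)))\<^sup>2 / w N) \<longlongrightarrow> 0) sequentially"
    and "((\<lambda>N. w N / (ln (real N))\<^sup>2) \<longlongrightarrow> 0) sequentially"
  shows "weak_conv_m
     (\<lambda>N. distr M borel (\<lambda>\<omega>.
        (\<Sum>i=3..N. LL (thetaN w N) N a b i \<omega>) /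
        sqrt (\<alpha> * ln ((thetaN w N + sqrt ((thetaN w N)\<^sup>2 - 1)) / (2 * sqrt ((thetaN w N)\<^sup>2 - 1))))))
     std_normal_distribution"
proof -
  interpret prob_space M by fact
  have "filterlim (\<lambda>N::nat. (ln (ln (real N)))\<^sup>2) at_top sequentially"
    by real_asymp
  then have "filterlim w at_top sequentially"
    using filterlim_at_top_if_dominates[OF _ assms(9)] assms(8) by simp
  note \<theta> = thetaN_asymptotics[OF assms(8) this powr_mult_tendsto_0_if_ln_sq_dominates[OF assms(10)]]
  have "weak_conv_m (\<lambda>N. distr M borel (\<lambda>\<omega>. \<Sum>k\<in>summand_index N.
      summand_coef (thetaN w N) N k / sqrt (\<alpha> * limit_var (thetaN w N)) * case_sum a (cc b) k \<omega>))
      std_normal_distribution"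
    using indep_vars_case_sum_cc[OF assms(3)] entry_moments[OF assms(2,4,5,7)]
    by (intro summand_sum_weak_conv_std_normal[OF assms(2) _ _ _ _ _ \<theta>])
  moreover have "(\<Sum>i=3..N. LL (thetaN w N) N a b i \<omega>) /
        sqrt (\<alpha> * ln ((thetaN w N + sqrt ((thetaN w N)\<^sup>2 - 1)) / (2 * sqrt ((thetaN w N)\<^sup>2 - 1))))
      = (\<Sum>k\<in>summand_index N.
        summand_coef (thetaN w N) N k / sqrt (\<alpha> * limit_var (thetaN w N)) * case_sum a (cc b) k \<omega>)"
    for N \<omega>
  proof (cases "N = 0")
    case False
    then have "thetaN w N > 1" using assms(8) by (simp add: thetaN_gt_1)
    then show ?thesis
      by (simp add: sum_LL_eq_summands limit_var_eq sum_divide_distrib)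
  qed (simp add: summand_index_def Plus_def)
  ultimately show ?thesis
    by simp
qed

end
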